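(* Let $C\subseteq\{0,1\}^n$ be the $d$-maximum class of a simple linear arrangement $A$ of $n$ hyperplanes in $\mathbb{R}^d$, and consider the corner-peeling of all of $C$ obtained by sweeping: a generic hyperplane is swept across $A$, peeling each concept when it crosses the last $d$-intersection point in the closure of its cell, after which the remaining class corresponds to the simple arrangement induced on the sweeping hyperplane in $\mathbb{R}^{d-1}$, which is swept in the same way, and so on. Then the sequence of cubes $C'_0,C'_1,\dots$ removed in this corner-peeling has non-increasing dimension; in fact there are $\binom{n}{d}$ cubes of dimension $d$, then $\binom{n}{d-1}$ cubes of dimension $d-1$, and so on.
   Context: A simple linear arrangement is a collection of $n\ge d$ oriented affine hyperplanes in $\mathbb{R}^d$ in general position (any $k<d$ meet in a $(d-k)$-plane, any $d$ meet in a single point called a $d$-intersection point, any $d+1$ have empty intersection); each complementary cell gives the concept in $\{0,1\}^n$ recording on which side of each hyperplane it lies, and $C$ is the set of these concepts; it is $d$-maximum ($|C|=\sum_{i=0}^d\binom{n}{i}$). A generic hyperplane $h$ is one with $A\cup\{h\}$ in general position; it starts with all $d$-intersection points in its positive half-space. A $k$-cube in $C$ is a set of $2^k$ points of $C$ agreeing outside some $k$ coordinates and taking all values on them. In a corner-peeling ordering $v_1,v_2,\dots$ with $C_0=C$, $C_t=C_{t-1}\setminus\{v_t\}$, $C'_{t-1}$ denotes the unique cube of maximum dimension among cubes of $C_{t-1}$ containing $v_t$ (which contains all neighbours of $v_t$ in the one-inclusion graph of $C_{t-1}$). *)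

theory Defs
  imports "HOL-Analysis.Analysis"
begin

definition hyp :: "(nat \<Rightarrow> 'a::euclidean_space) \<Rightarrow> (nat \<Rightarrow> real) \<Rightarrow> nat \<Rightarrow> 'a set" where
  "hyp w b i = {x. w i \<bullet> x = b i}"

definition simple_in :: "nat \<Rightarrow> (nat \<Rightarrow> 'a::euclidean_space) \<Rightarrow> (nat \<Rightarrow> real) \<Rightarrow> 'a set \<Rightarrow> nat \<Rightarrow> bool" where
  "simple_in n w b F m \<longleftrightarrow>
     (\<forall>S. S \<subseteq> {..<n} \<longrightarrow>
        (card S \<le> m \<longrightarrow> aff_dim (F \<inter> \<Inter>(hyp w b ` S)) = int m - int (card S)) \<and>
        (card S = Suc m \<longrightarrow> F \<inter> \<Inter>(hyp w b ` S) = {}))"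

text \<open>Concepts are encoded as subsets of {..<n} (the set of coordinates equal to 1).\<close>

definition cells :: "nat \<Rightarrow> (nat \<Rightarrow> 'a::euclidean_space) \<Rightarrow> (nat \<Rightarrow> real) \<Rightarrow> 'a set \<Rightarrow> 'a set set" where
  "cells n w b F = components (F - (\<Union>i<n. hyp w b i))"

definition cell_concept :: "nat \<Rightarrow> (nat \<Rightarrow> 'a::euclidean_space) \<Rightarrow> (nat \<Rightarrow> real) \<Rightarrow> 'a set \<Rightarrow> nat set" where
  "cell_concept n w b K = {i. i < n \<and> (\<exists>x\<in>K. b i < w i \<bullet> x)}"

definition concept_class :: "nat \<Rightarrow> (nat \<Rightarrow> 'a::euclidean_space) \<Rightarrow> (nat \<Rightarrow> real) \<Rightarrow> nat set set" where
  "concept_class n w b = cell_concept n w b ` cells n w b UNIV"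

definition verts :: "nat \<Rightarrow> (nat \<Rightarrow> 'a::euclidean_space) \<Rightarrow> (nat \<Rightarrow> real) \<Rightarrow> 'a set \<Rightarrow> nat \<Rightarrow> 'a set" where
  "verts n w b F m = {v \<in> F. \<exists>S. S \<subseteq> {..<n} \<and> card S = m \<and> v \<in> \<Inter>(hyp w b ` S)}"

text \<open>Sweep data: at level k the sweeping hyperplane inside the flat F_k is
  {x \<in> F_k. a k \<bullet> x = \<sigma>}, with positive side a k \<bullet> x > \<sigma>; it is translated
  (\<sigma> increasing) from a position with all intersection points of level k on its
  positive side to its final position \<sigma> = s k, beyond all of them.\<close>

primrec flat :: "(nat \<Rightarrow> 'a::euclidean_space) \<Rightarrow> (nat \<Rightarrow> real) \<Rightarrow> nat \<Rightarrow> 'a set" where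
  "flat a s 0 = UNIV"
| "flat a s (Suc k) = flat a s k \<inter> {x. a k \<bullet> x = s k}"

text \<open>Genericity of the sweep: the sweeping hyperplane crosses the intersection
  points one at a time, ends beyond all of them, and (equivalently, general
  position with the arrangement at non-critical times) the arrangement induced on
  the final sweeping hyperplane is again simple.\<close>

definition sweep_ok :: "nat \<Rightarrow> nat \<Rightarrow> (nat \<Rightarrow> 'a::euclidean_space) \<Rightarrow> (nat \<Rightarrow> real)
    \<Rightarrow> (nat \<Rightarrow> 'a) \<Rightarrow> (nat \<Rightarrow> real) \<Rightarrow> bool" where
  "sweep_ok n d w b a s \<longleftrightarrow>
     (\<forall>k<d. (\<forall>v\<in>verts n w b (flat a s k) (d - k). a k \<bullet> v < s k)
          \<and> inj_on (\<lambda>v. a k \<bullet> v) (verts n w b (flat a s k) (d - k))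
          \<and> simple_in n w b (flat a s (Suc k)) (d - Suc k))"

text \<open>Concept c is peeled at level k (k \<le> d) at time t: it is the concept of a
  cell K of the arrangement induced on F_k; for k < d the cell is not met by the
  final sweeping hyperplane (so it does not survive to the next level) and t is
  the sweep parameter of the last intersection point in the closure of K; at
  level d (F_d is a point) the single remaining concept is peeled.\<close>

definition peeled_at :: "nat \<Rightarrow> nat \<Rightarrow> (nat \<Rightarrow> 'a::euclidean_space) \<Rightarrow> (nat \<Rightarrow> real)
    \<Rightarrow> (nat \<Rightarrow> 'a) \<Rightarrow> (nat \<Rightarrow> real) \<Rightarrow> nat \<Rightarrow> real \<Rightarrow> nat set \<Rightarrow> bool" where
  "peeled_at n d w b a s k t c \<longleftrightarrow>
     k \<le> d \<and> (\<exists>K\<in>cells n w b (flat a s k). cell_concept n w b K = c \<and>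
        (if k < d then K \<inter> flat a s (Suc k) = {} \<and>
              t = Max ((\<lambda>v. a k \<bullet> v) ` (verts n w b (flat a s k) (d - k) \<inter> closure K))
         else t = 0))"

definition sweep_order :: "nat \<Rightarrow> nat \<Rightarrow> (nat \<Rightarrow> 'a::euclidean_space) \<Rightarrow> (nat \<Rightarrow> real)
    \<Rightarrow> (nat \<Rightarrow> 'a) \<Rightarrow> (nat \<Rightarrow> real) \<Rightarrow> nat set list \<Rightarrow> bool" where
  "sweep_order n d w b a s vs \<longleftrightarrow>
     distinct vs \<and> set vs = concept_class n w b \<and>
     (\<forall>i j. i < j \<and> j < length vs \<longrightarrow>
        (\<exists>k t k' t'. peeled_at n d w b a s k t (vs ! i) \<and> peeled_at n d w b a s k' t' (vs ! j)
                      \<and> (k < k' \<or> (k = k' \<and> t \<le> t'))))"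

definition is_cube :: "nat \<Rightarrow> nat set set \<Rightarrow> nat set set \<Rightarrow> nat \<Rightarrow> bool" where
  "is_cube n D Q k \<longleftrightarrow>
     (\<exists>K B. K \<subseteq> {..<n} \<and> card K = k \<and> B \<subseteq> {..<n} - K \<and>
            Q = (\<lambda>T. B \<union> T) ` Pow K \<and> Q \<subseteq> D)"

text \<open>Dimension of the (unique) maximum-dimensional cube of D containing v,
  i.e. dim C'_(t-1) for D = C_(t-1), v = v_t.\<close>

definition max_cube_dim :: "nat \<Rightarrow> nat set set \<Rightarrow> nat set \<Rightarrow> nat" where
  "max_cube_dim n D v = Max {k. \<exists>Q. is_cube n D Q k \<and> v \<in> Q}"

end

theory Submission
  imports Defs
begin

text \<open>Cells are indexed by their sign vectors, and an arrangement of n hyperplanes that is simple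
  in an m-flat has exactly sum of (n choose i) for i \<le> m cells, by deletion-restriction.  When
  the sweep at level k peels the concept c, the closure of its cell has a highest vertex v (in the
  sweep direction) lying on m = d - k hyperplanes S.  Moving from v along a dual basis of S
  realizes all 2^m sign patterns on S, and every such cell is still present at level k: if it
  was peeled earlier at level k, its own highest vertex would lie above v, because the edges
  leaving v inside the cell of c all descend.  So c lies in an m-cube of what remains.  Conversely
  no m + 1 hyperplanes are shattered by the cells of a flat of dimension m, so no larger cube
  exists, and the concepts of level k, which are peeled consecutively, are exactly those whose
  removed cube has dimension d - k.\<close>

section \<open>Cells of an arrangement\<close>

definition orient :: "nat set \<Rightarrow> nat \<Rightarrow> real" where
  "orient c i = (if i \<in> c then 1 else -1)"

definition open_cell ::
    "nat \<Rightarrow> (nat \<Rightarrow> 'a::euclidean_space) \<Rightarrow> (nat \<Rightarrow> real) \<Rightarrow> 'a set \<Rightarrow> nat set \<Rightarrow> 'a set"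
  where "open_cell n w b F c = {x\<in>F. \<forall>i<n. 0 < orient c i * (w i \<bullet> x - b i)}"

definition closed_cell ::
    "nat \<Rightarrow> (nat \<Rightarrow> 'a::euclidean_space) \<Rightarrow> (nat \<Rightarrow> real) \<Rightarrow> 'a set \<Rightarrow> nat set \<Rightarrow> 'a set"
  where "closed_cell n w b F c = {x\<in>F. \<forall>i<n. 0 \<le> orient c i * (w i \<bullet> x - b i)}"

definition realized ::
    "nat \<Rightarrow> (nat \<Rightarrow> 'a::euclidean_space) \<Rightarrow> (nat \<Rightarrow> real) \<Rightarrow> 'a set \<Rightarrow> nat set set"
  where "realized n w b F = {c. c \<subseteq> {..<n} \<and> open_cell n w b F c \<noteq> {}}"

definition sign_vector :: "nat \<Rightarrow> (nat \<Rightarrow> 'a::euclidean_space) \<Rightarrow> (nat \<Rightarrow> real) \<Rightarrow> 'a \<Rightarrow> nat set" where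
  "sign_vector n w b x = {i. i < n \<and> b i < w i \<bullet> x}"

definition directions :: "'a::real_vector set \<Rightarrow> 'a set" where
  "directions F = {u. \<forall>x\<in>F. \<forall>t::real. x + t *\<^sub>R u \<in> F}"

lemma orient_sq [simp]: "orient c i * orient c i = 1"
  by (simp add: orient_def)

lemma orient_nonzero [simp]: "orient c i \<noteq> 0"
  by (simp add: orient_def)

lemma orient_cases: "orient c i = 1 \<or> orient c i = -1"
  by (simp add: orient_def)

lemma orient_inner_add:
  "orient c i * (w i \<bullet> (x + t *\<^sub>R u) - b i)
    = orient c i * (w i \<bullet> x - b i) + t * (orient c i * (w i \<bullet> u))"
  by (simp add: inner_add_right algebra_simps)

lemma open_cell_subset_closed_cell: "open_cell n w b F c \<subseteq> closed_cell n w b F c"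
  unfolding open_cell_def closed_cell_def by (auto intro: less_imp_le)

lemma closed_cellD: "x \<in> closed_cell n w b F c \<Longrightarrow> x \<in> F"
  unfolding closed_cell_def by auto

lemma open_cell_subset_complement: "open_cell n w b F c \<subseteq> F - (\<Union>i<n. hyp w b i)"
  unfolding open_cell_def hyp_def by auto

lemma open_cell_mono: "F' \<subseteq> F \<Longrightarrow> open_cell n w b F' c \<subseteq> open_cell n w b F c"
  unfolding open_cell_def by auto

lemma realized_mono: "F' \<subseteq> F \<Longrightarrow> realized n w b F' \<subseteq> realized n w b F"
  unfolding realized_def using open_cell_mono by blast

lemma finite_realized: "finite (realized n w b F)"
  by (rule finite_subset[of _ "Pow {..<n}"]) (auto simp: realized_def)

lemma open_cell_Int_hyperplane:
  "open_cell n w b (F \<inter> {x. a \<bullet> x = r}) c = open_cell n w b F c \<inter> {x. a \<bullet> x = r}"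
  unfolding open_cell_def by auto

lemma convex_open_cell:
  assumes "convex F" shows "convex (open_cell n w b F c)"
  unfolding convex_def
proof (intro ballI allI impI)
  fix x y and u v :: real
  assume x: "x \<in> open_cell n w b F c" and y: "y \<in> open_cell n w b F c"
    and uv: "0 \<le> u" "0 \<le> v" "u + v = 1"
  have "u *\<^sub>R x + v *\<^sub>R y \<in> F"
    using x y uv assms unfolding open_cell_def convex_def by auto
  moreover have "0 < orient c i * (w i \<bullet> (u *\<^sub>R x + v *\<^sub>R y) - b i)" if i: "i < n" for i
  proof -
    have pos: "0 < orient c i * (w i \<bullet> x - b i)" "0 < orient c i * (w i \<bullet> y - b i)"
      using x y i unfolding open_cell_def by auto
    have "orient c i * (w i \<bullet> (u *\<^sub>R x + v *\<^sub>R y) - b i)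
       = u * (orient c i * (w i \<bullet> x - b i)) + v * (orient c i * (w i \<bullet> y - b i))"
      using uv(3) by (simp add: inner_add_right algebra_simps flip: distrib_right)
    also have "\<dots> > 0" using pos uv
      by (smt (verit, best) mult_nonneg_nonneg mult_pos_pos)
    finally show ?thesis .
  qed
  ultimately show "u *\<^sub>R x + v *\<^sub>R y \<in> open_cell n w b F c" unfolding open_cell_def by auto
qed

lemma open_cell_sign_vector:
  assumes "x \<in> F - (\<Union>i<n. hyp w b i)" shows "x \<in> open_cell n w b F (sign_vector n w b x)"
proof -
  have "w i \<bullet> x \<noteq> b i" if "i < n" for i using assms that unfolding hyp_def by auto
  then show ?thesis using assms unfolding open_cell_def sign_vector_def orient_def by force
qed

lemma sign_vector_subset: "sign_vector n w b x \<subseteq> {..<n}"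
  by (auto simp: sign_vector_def)

lemma sign_vector_eq:
  assumes "x \<in> open_cell n w b F c" "c \<subseteq> {..<n}" shows "sign_vector n w b x = c"
  using assms unfolding open_cell_def sign_vector_def orient_def
  by (auto split: if_splits)

lemma connected_component_eq_open_cell:
  assumes "convex F" and x: "x \<in> F - (\<Union>i<n. hyp w b i)"
  shows "connected_component_set (F - (\<Union>i<n. hyp w b i)) x
    = open_cell n w b F (sign_vector n w b x)"
proof
  let ?S = "F - (\<Union>i<n. hyp w b i)" and ?C = "connected_component_set (F - (\<Union>i<n. hyp w b i)) x"
  show "open_cell n w b F (sign_vector n w b x) \<subseteq> ?C"
    by (rule connected_component_maximal[OF open_cell_sign_vector[OF x]
          convex_connected[OF convex_open_cell[OF assms(1)]] open_cell_subset_complement])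
  show "?C \<subseteq> open_cell n w b F (sign_vector n w b x)"
  proof
    fix y assume y: "y \<in> ?C"
    have sub: "?C \<subseteq> ?S" by (rule connected_component_subset)
    have xC: "x \<in> ?C" using x by simp
    have off: "w i \<bullet> z \<noteq> b i" if "z \<in> ?C" "i < n" for z i
      using that sub unfolding hyp_def by auto
    have "(b i < w i \<bullet> x) = (b i < w i \<bullet> y)" if i: "i < n" for i
    proof -
      have "\<not> (w i \<bullet> x \<le> b i \<and> b i \<le> w i \<bullet> y)" "\<not> (w i \<bullet> y \<le> b i \<and> b i \<le> w i \<bullet> x)"
        using connected_ivt_hyperplane[OF connected_connected_component xC y, of "w i" "b i"]
          connected_ivt_hyperplane[OF connected_connected_component y xC, of "w i" "b i"]
          off[OF _ i] by blast+
      then show ?thesis using off[OF xC i] off[OF y i] by linarith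
    qed
    then have "sign_vector n w b y = sign_vector n w b x"
      unfolding sign_vector_def by blast
    moreover have "y \<in> open_cell n w b F (sign_vector n w b y)"
      using open_cell_sign_vector sub y by blast
    ultimately show "y \<in> open_cell n w b F (sign_vector n w b x)" by simp
  qed
qed

lemma cells_eq_open_cells:
  assumes "convex F"
  shows "cells n w b F = open_cell n w b F ` realized n w b F"
proof -
  let ?S = "F - (\<Union>i<n. hyp w b i)"
  have "cells n w b F = (\<lambda>x. open_cell n w b F (sign_vector n w b x)) ` ?S"
    unfolding cells_def components_def using connected_component_eq_open_cell[OF assms] by auto
  also have "\<dots> = open_cell n w b F ` realized n w b F"
  proof (intro equalityI subsetI)
    fix K assume "K \<in> (\<lambda>x. open_cell n w b F (sign_vector n w b x)) ` ?S"
    then obtain x where x: "x \<in> ?S" "K = open_cell n w b F (sign_vector n w b x)" by auto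
    have "sign_vector n w b x \<in> realized n w b F"
      using open_cell_sign_vector[OF x(1)] unfolding realized_def sign_vector_def by auto
    then show "K \<in> open_cell n w b F ` realized n w b F" using x(2) by blast
  next
    fix K assume "K \<in> open_cell n w b F ` realized n w b F"
    then obtain c x where c: "c \<in> realized n w b F" "K = open_cell n w b F c"
      and x: "x \<in> open_cell n w b F c"
      unfolding realized_def by auto
    have "sign_vector n w b x = c" using sign_vector_eq[OF x] c(1) unfolding realized_def by auto
    moreover have "x \<in> ?S" using x open_cell_subset_complement by blast
    ultimately show "K \<in> (\<lambda>x. open_cell n w b F (sign_vector n w b x)) ` ?S"
      using c(2) by blast
  qed
  finally show ?thesis .
qed

lemma cell_concept_open_cell:
  assumes "c \<in> realized n w b F" shows "cell_concept n w b (open_cell n w b F c) = c"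
proof -
  obtain x where x: "x \<in> open_cell n w b F c" and c: "c \<subseteq> {..<n}"
    using assms unfolding realized_def by auto
  have "i \<in> c" if "i < n" "y \<in> open_cell n w b F c" "b i < w i \<bullet> y" for i y
    using that unfolding open_cell_def orient_def by (force split: if_splits)
  moreover have "b i < w i \<bullet> x" if "i \<in> c" for i
    using x that c unfolding open_cell_def orient_def by auto
  ultimately show ?thesis using x c unfolding cell_concept_def by auto
qed

lemma concept_class_eq_realized: "concept_class n w b = realized n w b UNIV"
  unfolding concept_class_def cells_eq_open_cells[OF convex_UNIV] image_image
  using cell_concept_open_cell by force

section \<open>Counting cells\<close>

definition sauer_bound :: "nat \<Rightarrow> nat \<Rightarrow> nat" where
  "sauer_bound n m = (\<Sum>i\<le>m. n choose i)"

lemma sauer_bound_0_right [simp]: "sauer_bound n 0 = 1"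
  by (simp add: sauer_bound_def)

lemma sauer_bound_0_left: "sauer_bound 0 m = 1"
  by (induction m) (auto simp: sauer_bound_def)

lemma sauer_bound_Suc_right: "sauer_bound n (Suc m) = sauer_bound n m + (n choose Suc m)"
  by (simp add: sauer_bound_def)

lemma sauer_bound_Suc_Suc: "sauer_bound (Suc n) (Suc m) = sauer_bound n (Suc m) + sauer_bound n m"
  by (induction m) (auto simp: sauer_bound_def)

lemma sauer_bound_split:
  "k \<le> d \<Longrightarrow> (\<Sum>j<k. n choose (d - j)) + sauer_bound n (d - k) = sauer_bound n d"
proof (induction k)
  case (Suc k)
  then have "d - k = Suc (d - Suc k)" by simp
  then show ?case using Suc by (simp add: sauer_bound_Suc_right)
qed simp

lemma affine_hyp: "affine (hyp w b i)"
  unfolding hyp_def by (rule affine_hyperplane)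

lemma affine_flat: "affine (flat a s k)"
  by (induction k) (auto intro!: affine_Int affine_hyperplane simp: affine_UNIV)

lemma flat_antimono: "k \<le> k' \<Longrightarrow> flat a s k' \<subseteq> flat a s k"
  by (rule lift_Suc_antimono_le[of "flat a s"]) auto

lemma mem_Inter_hyp_iff: "x \<in> \<Inter>(hyp w b ` S) \<longleftrightarrow> (\<forall>i\<in>S. w i \<bullet> x = b i)"
  unfolding hyp_def by auto

lemma diff_in_directions: "affine F \<Longrightarrow> p \<in> F \<Longrightarrow> q \<in> F \<Longrightarrow> q - p \<in> directions F"
  unfolding directions_def using mem_affine_3_minus by blast

lemma add_in_directions: "u \<in> directions F \<Longrightarrow> x \<in> F \<Longrightarrow> x + t *\<^sub>R u \<in> F"
  unfolding directions_def by auto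

lemma subspace_directions: "subspace (directions F)"
proof -
  have "x + y \<in> directions F" if "x \<in> directions F" "y \<in> directions F" for x y
    unfolding directions_def
  proof safe
    fix z t assume "z \<in> F"
    then have "(z + t *\<^sub>R x) + t *\<^sub>R y \<in> F" using that unfolding directions_def by blast
    then show "z + t *\<^sub>R (x + y) \<in> F" by (simp add: algebra_simps)
  qed
  then show ?thesis unfolding subspace_def directions_def by (simp add: scaleR_scaleR)
qed

lemma simple_in_aff_dim:
  "simple_in n w b F m \<Longrightarrow> S \<subseteq> {..<n} \<Longrightarrow> card S \<le> m \<Longrightarrow>
    aff_dim (F \<inter> \<Inter>(hyp w b ` S)) = int m - int (card S)"
  unfolding simple_in_def by blast

lemma simple_in_empty:
  "simple_in n w b F m \<Longrightarrow> S \<subseteq> {..<n} \<Longrightarrow> card S = Suc m \<Longrightarrow> F \<inter> \<Inter>(hyp w b ` S) = {}"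
  unfolding simple_in_def by blast

lemma simple_in_aff_dim_flat: "simple_in n w b F m \<Longrightarrow> aff_dim F = int m"
  using simple_in_aff_dim[of n w b F m "{}"] by simp

lemma simple_in_singleton:
  assumes "simple_in n w b F m" "S \<subseteq> {..<n}" "card S = m"
  obtains z where "F \<inter> \<Inter>(hyp w b ` S) = {z}"
  using simple_in_aff_dim[OF assms(1,2)] assms(3) by (auto simp: aff_dim_eq_0)

lemma simple_in_off_hyp:
  assumes "simple_in n w b F m" "S \<subseteq> {..<n}" "card S = m" "\<forall>i\<in>S. w i \<bullet> v = b i" "v \<in> F"
    and "i < n" "i \<notin> S"
  shows "w i \<bullet> v \<noteq> b i"
proof
  assume "w i \<bullet> v = b i"
  then have "v \<in> F \<inter> \<Inter>(hyp w b ` insert i S)"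
    using assms(4,5) unfolding hyp_def by auto
  moreover have "finite S" using assms(2) finite_subset by blast
  then have "F \<inter> \<Inter>(hyp w b ` insert i S) = {}"
    using assms by (intro simple_in_empty[OF assms(1)]) auto
  ultimately show False by blast
qed

lemma simple_in_less: "simple_in n w b F m \<Longrightarrow> n' \<le> n \<Longrightarrow> simple_in n' w b F m"
  unfolding simple_in_def by (meson order_trans lessThan_subset_iff)

lemma simple_in_hyp:
  assumes "simple_in (Suc n) w b F (Suc m)"
  shows "simple_in n w b (F \<inter> hyp w b n) m"
  unfolding simple_in_def
proof (intro allI impI conjI)
  fix S assume S: "S \<subseteq> {..<n}"
  have "finite S" using S finite_subset by blast
  then have card: "card (insert n S) = Suc (card S)" using S by (subst card_insert_disjoint) auto
  have eq: "F \<inter> hyp w b n \<inter> \<Inter>(hyp w b ` S) = F \<inter> \<Inter>(hyp w b ` insert n S)" by auto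
  have S': "insert n S \<subseteq> {..<Suc n}" using S by auto
  show "aff_dim (F \<inter> hyp w b n \<inter> \<Inter>(hyp w b ` S)) = int m - int (card S)" if "card S \<le> m"
    using simple_in_aff_dim[OF assms S'] eq card that by simp
  show "F \<inter> hyp w b n \<inter> \<Inter>(hyp w b ` S) = {}" if "card S = Suc m"
    using simple_in_empty[OF assms S'] eq card that by simp
qed

lemma simple_in_not_in_hyp:
  assumes "simple_in (Suc n) w b F (Suc m)"
  obtains q where "q \<in> F" "w n \<bullet> q \<noteq> b n"
proof -
  have "F \<inter> hyp w b n \<noteq> F"
    using simple_in_aff_dim_flat[OF simple_in_hyp[OF assms]] simple_in_aff_dim_flat[OF assms]
    by auto
  then show ?thesis using that unfolding hyp_def by blast
qed

lemma realized_singleton: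
  assumes "F = {z}" "\<And>i. i < n \<Longrightarrow> z \<notin> hyp w b i"
  shows "realized n w b F = {sign_vector n w b z}"
proof (intro equalityI subsetI)
  fix c assume "c \<in> realized n w b F"
  then obtain x where "x \<in> open_cell n w b F c" "c \<subseteq> {..<n}" unfolding realized_def by auto
  moreover have "x = z" using \<open>x \<in> open_cell n w b F c\<close> assms(1) unfolding open_cell_def by auto
  ultimately show "c \<in> {sign_vector n w b z}" using sign_vector_eq by blast
next
  fix c assume "c \<in> {sign_vector n w b z}"
  moreover have "z \<in> F - (\<Union>i<n. hyp w b i)" using assms by auto
  ultimately show "c \<in> realized n w b F"
    using open_cell_sign_vector[of z F w b n] sign_vector_subset[of n w b z] by (auto simp: realized_def)
qed

lemma open_cell_along_direction:
  assumes p: "p \<in> F" and u: "u \<in> directions F"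
    and h: "\<forall>i<n. 0 < orient c i * (w i \<bullet> p - b i) \<or> (w i \<bullet> p = b i \<and> 0 < orient c i * (w i \<bullet> u))"
  shows "\<exists>e>0. p + e *\<^sub>R u \<in> open_cell n w b F c"
proof -
  define J where "J = {i. i < n \<and> 0 < orient c i * (w i \<bullet> p - b i)}"
  define g where "g i = orient c i * (w i \<bullet> p - b i) / (2 * (\<bar>w i \<bullet> u\<bar> + 1))" for i
  define e where "e = Min (insert 1 (g ` J))"
  have "finite J" unfolding J_def by auto
  have gpos: "g i > 0" if "i \<in> J" for i
    using that unfolding g_def J_def by (auto intro!: divide_pos_pos)
  have epos: "e > 0" unfolding e_def using gpos \<open>finite J\<close> by (subst Min_gr_iff) auto
  have ele: "e \<le> g i" if "i \<in> J" for i unfolding e_def using that \<open>finite J\<close> by (intro Min_le) auto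
  have "0 < orient c i * (w i \<bullet> (p + e *\<^sub>R u) - b i)" if i: "i < n" for i
  proof (cases "i \<in> J")
    case True
    let ?a = "orient c i * (w i \<bullet> p - b i)" and ?q = "\<bar>w i \<bullet> u\<bar>"
    have apos: "?a > 0" using True unfolding J_def by auto
    have "e \<le> ?a / (2 * (?q + 1))" using ele[OF True] unfolding g_def by simp
    then have "2 * (e * (?q + 1)) \<le> ?a"
      using pos_le_divide_eq[of "2 * (?q + 1)"] by (simp add: algebra_simps)
    moreover have "e * ?q \<le> e * (?q + 1)" using epos by (simp add: mult_left_mono)
    moreover have "\<bar>e * (orient c i * (w i \<bullet> u))\<bar> = e * ?q"
      using orient_cases[of c i] epos by (auto simp: abs_mult)
    moreover have "- (e * (orient c i * (w i \<bullet> u))) \<le> \<bar>e * (orient c i * (w i \<bullet> u))\<bar>"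
      by (rule abs_ge_minus_self)
    ultimately show ?thesis using apos epos unfolding orient_inner_add by linarith
  next
    case False
    then show ?thesis using h i epos unfolding J_def orient_inner_add by auto
  qed
  then show ?thesis using epos add_in_directions[OF u p] unfolding open_cell_def by blast
qed

lemma open_cell_Suc_out:
  "c \<subseteq> {..<n} \<Longrightarrow> open_cell (Suc n) w b F c = {x\<in>open_cell n w b F c. w n \<bullet> x < b n}"
  unfolding open_cell_def orient_def by (auto simp: less_Suc_eq)

lemma open_cell_Suc_in:
  "c \<subseteq> {..<n} \<Longrightarrow> open_cell (Suc n) w b F (insert n c) = {x\<in>open_cell n w b F c. b n < w n \<bullet> x}"
  unfolding open_cell_def orient_def by (auto simp: less_Suc_eq)

lemma open_cell_Suc_both_sides:
  assumes F: "affine F" and c: "c \<subseteq> {..<n}" and x: "x \<in> open_cell n w b F c" "w n \<bullet> x = b n"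
    and q: "q \<in> F" "w n \<bullet> q \<noteq> b n"
  shows "open_cell (Suc n) w b F c \<noteq> {}" "open_cell (Suc n) w b F (insert n c) \<noteq> {}"
proof -
  have xF: "x \<in> F" and slack: "\<forall>i<n. 0 < orient c i * (w i \<bullet> x - b i)"
    using x unfolding open_cell_def by auto
  obtain e where e: "e > 0" "x + e *\<^sub>R (q - x) \<in> open_cell n w b F c"
    using open_cell_along_direction[OF xF diff_in_directions[OF F xF q(1)]] slack by blast
  obtain e' where e': "e' > 0" "x + e' *\<^sub>R (x - q) \<in> open_cell n w b F c"
    using open_cell_along_direction[OF xF diff_in_directions[OF F q(1) xF]] slack by blast
  have "w n \<bullet> (x + e *\<^sub>R (q - x)) = b n + e * (w n \<bullet> q - b n)"
    "w n \<bullet> (x + e' *\<^sub>R (x - q)) = b n - e' * (w n \<bullet> q - b n)"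
    using x(2) by (simp_all add: inner_add_right inner_diff_right algebra_simps)
  then have "(w n \<bullet> (x + e *\<^sub>R (q - x)) < b n \<and> b n < w n \<bullet> (x + e' *\<^sub>R (x - q))) \<or>
      (w n \<bullet> (x + e' *\<^sub>R (x - q)) < b n \<and> b n < w n \<bullet> (x + e *\<^sub>R (q - x)))"
    using e(1) e'(1) q(2) by (cases "w n \<bullet> q < b n") (auto simp: mult_pos_neg)
  then show "open_cell (Suc n) w b F c \<noteq> {}" "open_cell (Suc n) w b F (insert n c) \<noteq> {}"
    using e(2) e'(2) unfolding open_cell_Suc_out[OF c] open_cell_Suc_in[OF c] by blast+
qed

text \<open>Deletion-restriction: each cell of the arrangement without hyperplane n either lies on one
  side of it or is cut by it, and the cut cells correspond to the cells of the arrangement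
  induced on hyperplane n.\<close>

definition realized_neg_side ::
    "nat \<Rightarrow> (nat \<Rightarrow> 'a::euclidean_space) \<Rightarrow> (nat \<Rightarrow> real) \<Rightarrow> 'a set \<Rightarrow> nat set set"
  where "realized_neg_side n w b F = {c \<in> realized n w b F. open_cell (Suc n) w b F c \<noteq> {}}"

definition realized_pos_side ::
    "nat \<Rightarrow> (nat \<Rightarrow> 'a::euclidean_space) \<Rightarrow> (nat \<Rightarrow> real) \<Rightarrow> 'a set \<Rightarrow> nat set set"
  where "realized_pos_side n w b F =
    {c \<in> realized n w b F. open_cell (Suc n) w b F (insert n c) \<noteq> {}}"

lemma realized_Suc:
  "realized (Suc n) w b F = realized_neg_side n w b F \<union> insert n ` realized_pos_side n w b F"
proof (intro equalityI subsetI)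
  fix c assume "c \<in> realized (Suc n) w b F"
  then obtain x where x: "x \<in> open_cell (Suc n) w b F c" and c: "c \<subseteq> {..<Suc n}"
    unfolding realized_def by auto
  have c': "c - {n} \<subseteq> {..<n}" "x \<in> open_cell n w b F (c - {n})"
    using x c unfolding open_cell_def orient_def by auto
  show "c \<in> realized_neg_side n w b F \<union> insert n ` realized_pos_side n w b F"
  proof (cases "n \<in> c")
    case True
    then have "c = insert n (c - {n})" by auto
    moreover have "c - {n} \<in> realized_pos_side n w b F"
      using x True c' unfolding realized_pos_side_def realized_def by (auto simp: insert_absorb)
    ultimately show ?thesis by blast
  next
    case False
    then show ?thesis using x c' unfolding realized_neg_side_def realized_def by auto
  qed
qed (auto simp: realized_def realized_neg_side_def realized_pos_side_def)

lemma realized_Suc_Un: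
  assumes F: "affine F" and q: "q \<in> F" "w n \<bullet> q \<noteq> b n"
  shows "realized_neg_side n w b F \<union> realized_pos_side n w b F = realized n w b F"
proof (intro equalityI subsetI)
  fix c assume c: "c \<in> realized n w b F"
  then obtain x where x: "x \<in> open_cell n w b F c" and cs: "c \<subseteq> {..<n}"
    unfolding realized_def by auto
  have "open_cell (Suc n) w b F c \<noteq> {} \<or> open_cell (Suc n) w b F (insert n c) \<noteq> {}"
  proof (cases "w n \<bullet> x = b n")
    case True
    then show ?thesis using open_cell_Suc_both_sides[OF F cs x True q] by blast
  next
    case False
    then show ?thesis using x
      by (auto simp: open_cell_Suc_out[OF cs] open_cell_Suc_in[OF cs] neq_iff)
  qed
  then show "c \<in> realized_neg_side n w b F \<union> realized_pos_side n w b F"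
    using c unfolding realized_neg_side_def realized_pos_side_def by blast
qed (auto simp: realized_neg_side_def realized_pos_side_def)

lemma realized_Suc_Int:
  assumes F: "affine F" and q: "q \<in> F" "w n \<bullet> q \<noteq> b n"
  shows "realized_neg_side n w b F \<inter> realized_pos_side n w b F
    = realized n w b (F \<inter> hyp w b n)"
proof (intro equalityI subsetI)
  fix c assume c: "c \<in> realized_neg_side n w b F \<inter> realized_pos_side n w b F"
  then have cs: "c \<subseteq> {..<n}" unfolding realized_neg_side_def realized_def by auto
  obtain x y where "x \<in> open_cell n w b F c" "w n \<bullet> x < b n"
    "y \<in> open_cell n w b F c" "b n < w n \<bullet> y"
    using c by (auto simp: realized_neg_side_def realized_pos_side_def open_cell_Suc_out[OF cs] open_cell_Suc_in[OF cs])
  moreover have "connected (open_cell n w b F c)"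
    using F by (intro convex_connected convex_open_cell affine_imp_convex)
  ultimately obtain z where "z \<in> open_cell n w b F c" "w n \<bullet> z = b n"
    using connected_ivt_hyperplane[of "open_cell n w b F c" x y "w n" "b n"] by auto
  then show "c \<in> realized n w b (F \<inter> hyp w b n)"
    using cs unfolding realized_def hyp_def open_cell_Int_hyperplane by auto
next
  fix c assume c: "c \<in> realized n w b (F \<inter> hyp w b n)"
  then obtain x where x: "x \<in> open_cell n w b F c" "w n \<bullet> x = b n" and cs: "c \<subseteq> {..<n}"
    unfolding realized_def hyp_def open_cell_Int_hyperplane by auto
  then show "c \<in> realized_neg_side n w b F \<inter> realized_pos_side n w b F"
    using open_cell_Suc_both_sides[OF F cs x q]
    unfolding realized_neg_side_def realized_pos_side_def realized_def by auto
qed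

lemma card_realized_Suc:
  assumes F: "affine F" and q: "q \<in> F" "w n \<bullet> q \<noteq> b n"
  shows "card (realized (Suc n) w b F)
    = card (realized n w b F) + card (realized n w b (F \<inter> hyp w b n))"
proof -
  let ?A = "realized_neg_side n w b F" and ?B = "realized_pos_side n w b F"
  have "?A \<inter> insert n ` ?B = {}" "inj_on (insert n) ?B" "finite ?A" "finite ?B"
    using finite_realized[of n w b F]
    unfolding realized_neg_side_def realized_pos_side_def realized_def inj_on_def
    by (auto simp: insert_ident)
  then have "card (realized (Suc n) w b F) = card (?A \<union> ?B) + card (?A \<inter> ?B)"
    using card_Un_Int[of ?A ?B] by (simp add: realized_Suc card_Un_disjoint card_image)
  then show ?thesis
    using realized_Suc_Un[where n = n and w = w and b = b, OF assms]
      realized_Suc_Int[where n = n and w = w and b = b, OF assms] by simp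
qed

lemma card_realized:
  assumes "affine F" "simple_in n w b F m"
  shows "card (realized n w b F) = sauer_bound n m"
  using assms
proof (induction n arbitrary: F m)
  case 0
  then have "F \<noteq> {}" using simple_in_aff_dim_flat by fastforce
  then have "realized 0 w b F = {{}}" unfolding realized_def open_cell_def by auto
  then show ?case by (simp add: sauer_bound_0_left)
next
  case (Suc n)
  show ?case
  proof (cases m)
    case 0
    obtain z where z: "F = {z}"
      using simple_in_singleton[OF Suc.prems(2), of "{}"] 0 by auto
    have "z \<notin> hyp w b i" if "i < Suc n" for i
      using simple_in_empty[OF Suc.prems(2), of "{i}"] that 0 z by auto
    then have "realized (Suc n) w b F = {sign_vector (Suc n) w b z}"
      using realized_singleton z by blast
    then show ?thesis using 0 by simp
  next
    case (Suc m')
    obtain q where q: "q \<in> F" "w n \<bullet> q \<noteq> b n"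
      using simple_in_not_in_hyp Suc.prems(2) \<open>m = Suc m'\<close> by blast
    have "card (realized n w b F) = sauer_bound n m"
      using Suc.IH[OF Suc.prems(1) simple_in_less[OF Suc.prems(2)]] by simp
    moreover have "card (realized n w b (F \<inter> hyp w b n)) = sauer_bound n m'"
      using Suc.IH[OF affine_Int[OF Suc.prems(1) affine_hyp] simple_in_hyp] Suc.prems(2)
        \<open>m = Suc m'\<close> by blast
    ultimately show ?thesis
      using card_realized_Suc[where n = n and w = w and b = b, OF Suc.prems(1) q]
        \<open>m = Suc m'\<close> sauer_bound_Suc_Suc by simp
  qed
qed

section \<open>Closed cells and their vertices\<close>

lemma closed_closed_cell:
  assumes "affine F" shows "closed (closed_cell n w b F c)"
proof -
  have "closed_cell n w b F c = F \<inter> (\<Inter>i<n. {x. 0 \<le> orient c i * (w i \<bullet> x - b i)})"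
    unfolding closed_cell_def by auto
  moreover have "closed {x. 0 \<le> orient c i * (w i \<bullet> x - b i)}" for i
    by (rule closed_Collect_le) (intro continuous_intros)+
  ultimately show ?thesis using affine_closed[OF assms] by (auto intro!: closed_Int closed_INT)
qed

lemma open_cell_segment:
  assumes F: "affine F" and x: "x \<in> closed_cell n w b F c" and y: "y \<in> open_cell n w b F c"
    and u: "0 < u" "u \<le> 1"
  shows "(1 - u) *\<^sub>R x + u *\<^sub>R y \<in> open_cell n w b F c"
proof -
  have "x \<in> F" "y \<in> F" using x y unfolding closed_cell_def open_cell_def by auto
  then have "(1 - u) *\<^sub>R x + u *\<^sub>R y \<in> F" using F unfolding affine_def by simp
  moreover have "0 < orient c i * (w i \<bullet> ((1 - u) *\<^sub>R x + u *\<^sub>R y) - b i)" if i: "i < n" for i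
  proof -
    have "0 \<le> orient c i * (w i \<bullet> x - b i)" "0 < orient c i * (w i \<bullet> y - b i)"
      using x y i unfolding closed_cell_def open_cell_def by auto
    then have "0 < (1 - u) * (orient c i * (w i \<bullet> x - b i)) + u * (orient c i * (w i \<bullet> y - b i))"
      using u by (simp add: add_nonneg_pos)
    also have "\<dots> = orient c i * (w i \<bullet> ((1 - u) *\<^sub>R x + u *\<^sub>R y) - b i)"
      by (simp add: inner_add_right algebra_simps)
    finally show ?thesis .
  qed
  ultimately show ?thesis unfolding open_cell_def by auto
qed

lemma closure_open_cell:
  assumes F: "affine F" and ne: "open_cell n w b F c \<noteq> {}"
  shows "closure (open_cell n w b F c) = closed_cell n w b F c"
proof
  show "closure (open_cell n w b F c) \<subseteq> closed_cell n w b F c"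
    by (rule closure_minimal[OF open_cell_subset_closed_cell closed_closed_cell[OF F]])
  show "closed_cell n w b F c \<subseteq> closure (open_cell n w b F c)"
  proof
    fix x assume x: "x \<in> closed_cell n w b F c"
    obtain y where y: "y \<in> open_cell n w b F c" using ne by auto
    show "x \<in> closure (open_cell n w b F c)"
    proof (cases "x = y")
      case False
      have "open_segment x y \<subseteq> open_cell n w b F c"
        using open_cell_segment[OF F x y] by (auto simp: in_segment)
      then have "closure (open_segment x y) \<subseteq> closure (open_cell n w b F c)"
        by (rule closure_mono)
      then show ?thesis using False by auto
    qed (use y closure_subset in blast)
  qed
qed

lemma open_cell_side_of_hyperplane:
  assumes F: "affine F" and ne: "open_cell n w b F c \<noteq> {}"
    and disjoint: "open_cell n w b F c \<inter> {x. a \<bullet> x = r} = {}"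
    and p: "p \<in> closed_cell n w b F c" "a \<bullet> p < r"
  shows "closed_cell n w b F c \<subseteq> {x. a \<bullet> x \<le> r}"
proof -
  have "open_cell n w b F c \<subseteq> {x. a \<bullet> x \<le> r}"
  proof (rule ccontr)
    assume "\<not> ?thesis"
    then obtain y where y: "y \<in> open_cell n w b F c" "\<not> a \<bullet> y \<le> r" by blast
    have "open_cell n w b F c \<subseteq> {x. r \<le> a \<bullet> x}"
    proof
      fix z assume z: "z \<in> open_cell n w b F c"
      have "connected (open_cell n w b F c)"
        using F by (intro convex_connected convex_open_cell affine_imp_convex)
      then show "z \<in> {x. r \<le> a \<bullet> x}"
        using connected_ivt_hyperplane[of "open_cell n w b F c" z y a r] disjoint y z
        by (force simp: not_le)
    qed
    then have "closure (open_cell n w b F c) \<subseteq> {x. r \<le> a \<bullet> x}"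
      by (rule closure_minimal) (rule closed_halfspace_ge)
    then show False using p closure_open_cell[OF F ne] by auto
  qed
  then have "closure (open_cell n w b F c) \<subseteq> {x. a \<bullet> x \<le> r}"
    by (rule closure_minimal) (rule closed_halfspace_le)
  then show ?thesis using closure_open_cell[OF F ne] by simp
qed

lemma ray_leaves_closed_cell:
  assumes x: "x \<in> closed_cell n w b F c" and u: "u \<in> directions F"
    and i0: "i0 < n" "orient c i0 * (w i0 \<bullet> u) < 0"
  obtains i t where "i < n" "orient c i * (w i \<bullet> u) < 0"
    "t = orient c i * (w i \<bullet> x - b i) / (- (orient c i * (w i \<bullet> u)))"
    "x + t *\<^sub>R u \<in> closed_cell n w b F c" "w i \<bullet> (x + t *\<^sub>R u) = b i"
proof -
  define I where "I = {i. i < n \<and> orient c i * (w i \<bullet> u) < 0}"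
  define tt where "tt i = orient c i * (w i \<bullet> x - b i) / (- (orient c i * (w i \<bullet> u)))" for i
  have "finite I" "I \<noteq> {}" using i0 unfolding I_def by auto
  then have "Min (tt ` I) \<in> tt ` I" by (intro Min_in) auto
  then obtain i where iI: "i \<in> I" and i: "tt i = Min (tt ` I)" by auto
  have tmin: "tt i \<le> tt l" if "l \<in> I" for l
    unfolding i using \<open>finite I\<close> that by (intro Min_le) auto
  have tt_mult: "tt l * (orient c l * (w l \<bullet> u)) = - (orient c l * (w l \<bullet> x - b l))" if "l \<in> I" for l
  proof -
    have "(p / (- q)) * q = - p" if "q \<noteq> 0" for p q :: real using that by (simp add: field_simps)
    moreover have "orient c l * (w l \<bullet> u) \<noteq> 0" using \<open>l \<in> I\<close> unfolding I_def by auto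
    ultimately show ?thesis unfolding tt_def by blast
  qed
  have "0 \<le> tt i" unfolding tt_def using iI x unfolding I_def closed_cell_def
    by (intro divide_nonneg_pos) auto
  have "0 \<le> orient c l * (w l \<bullet> (x + tt i *\<^sub>R u) - b l)" if l: "l < n" for l
  proof (cases "l \<in> I")
    case True
    then have "tt l * (orient c l * (w l \<bullet> u)) \<le> tt i * (orient c l * (w l \<bullet> u))"
      using tmin[OF True] unfolding I_def by (simp add: mult_right_mono_neg)
    then show ?thesis using tt_mult[OF True] unfolding orient_inner_add by linarith
  next
    case False
    then have "0 \<le> orient c l * (w l \<bullet> u)" "0 \<le> orient c l * (w l \<bullet> x - b l)"
      using l x unfolding I_def closed_cell_def by auto
    then show ?thesis using \<open>0 \<le> tt i\<close> unfolding orient_inner_add by simp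
  qed
  moreover have "x + tt i *\<^sub>R u \<in> F"
    using u closed_cellD[OF x] by (rule add_in_directions)
  ultimately have "x + tt i *\<^sub>R u \<in> closed_cell n w b F c" unfolding closed_cell_def by auto
  moreover have "w i \<bullet> (x + tt i *\<^sub>R u) = b i"
    using tt_mult[OF iI] orient_inner_add[of c i w "x" "tt i" u b] by simp
  ultimately show ?thesis using that iI unfolding I_def tt_def by blast
qed

lemma ray_in_closed_cell:
  assumes x: "x \<in> closed_cell n w b F c" and u: "u \<in> directions F"
    and nonneg: "\<forall>i<n. 0 \<le> orient c i * (w i \<bullet> u)" and t: "t \<ge> 0"
  shows "x + t *\<^sub>R u \<in> closed_cell n w b F c"
  using x add_in_directions[OF u] nonneg t unfolding closed_cell_def by (auto simp: orient_inner_add)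

lemma directions_orthogonal_eq_0:
  assumes "simple_in n w b F m" "S \<subseteq> {..<n}" "card S = m"
    and u: "u \<in> directions F" and orth: "\<forall>i\<in>S. w i \<bullet> u = 0"
  shows "u = 0"
proof -
  obtain z where z: "F \<inter> \<Inter>(hyp w b ` S) = {z}" using simple_in_singleton[OF assms(1-3)] .
  have "z \<in> F" "\<forall>i\<in>S. w i \<bullet> z = b i" using z by (auto simp: hyp_def)
  then have "z + 1 *\<^sub>R u \<in> F \<inter> \<Inter>(hyp w b ` S)"
    using add_in_directions[OF u, of z 1] orth by (auto simp: hyp_def inner_add_right)
  then have "z + 1 *\<^sub>R u = z" using z by blast
  then show ?thesis by simp
qed

lemma closed_cell_point_on_hyperplanes:
  assumes F: "affine F" and s: "simple_in n w b F m" and "m \<le> n" and c: "c \<in> realized n w b F"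
    and "r \<le> m"
  shows "\<exists>v S. v \<in> closed_cell n w b F c \<and> S \<subseteq> {..<n} \<and> card S = r \<and> (\<forall>i\<in>S. w i \<bullet> v = b i)"
  using \<open>r \<le> m\<close>
proof (induction r)
  case 0
  obtain x where "x \<in> open_cell n w b F c" using c unfolding realized_def by auto
  then have "x \<in> closed_cell n w b F c" using open_cell_subset_closed_cell by blast
  then show ?case by (intro exI[of _ x] exI[of _ "{}"]) auto
next
  case (Suc r)
  then obtain v S where v: "v \<in> closed_cell n w b F c" and S: "S \<subseteq> {..<n}" "card S = r"
    and vS: "\<forall>i\<in>S. w i \<bullet> v = b i"
    by auto
  define G where "G = F \<inter> \<Inter>(hyp w b ` S)"
  have "aff_dim G = int m - int r" unfolding G_def using simple_in_aff_dim[OF s S(1)] S(2) Suc.prems by simp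
  moreover have vG: "v \<in> G" unfolding G_def using v closed_cellD vS by (auto simp: hyp_def)
  ultimately have "G \<noteq> {v}" using Suc.prems by auto
  then obtain q where qG: "q \<in> G" and qv: "q \<noteq> v" using vG by blast
  have u: "q - v \<in> directions F"
    using diff_in_directions[OF F] vG qG unfolding G_def by blast
  have uS: "\<forall>i\<in>S. w i \<bullet> (q - v) = 0" using vG qG unfolding G_def by (auto simp: inner_diff_right hyp_def)
  have "\<exists>i<n. w i \<bullet> (q - v) \<noteq> 0"
  proof (rule ccontr)
    assume "\<not> ?thesis"
    then have "q - v = 0"
      using directions_orthogonal_eq_0[OF s _ _ u, of "{..<m}"] \<open>m \<le> n\<close> by auto
    then show False using qv by simp
  qed
  then obtain i where i: "i < n" "w i \<bullet> (q - v) \<noteq> 0" by auto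
  define u' where "u' = (if orient c i * (w i \<bullet> (q - v)) < 0 then q - v else v - q)"
  have "v - q \<in> directions F"
    using subspace_neg[OF subspace_directions u] by simp
  then have u': "u' \<in> directions F" "\<forall>l\<in>S. w l \<bullet> u' = 0" "orient c i * (w i \<bullet> u') < 0"
    using u uS i(2) orient_cases[of c i] unfolding u'_def
    by (auto simp: inner_diff_right inner_commute[of _ "q - v"])
  obtain i' t where i': "i' < n" "orient c i' * (w i' \<bullet> u') < 0"
    and inW: "v + t *\<^sub>R u' \<in> closed_cell n w b F c" and on: "w i' \<bullet> (v + t *\<^sub>R u') = b i'"
    using ray_leaves_closed_cell[OF v u'(1) i(1) u'(3)] by blast
  have "i' \<notin> S" using i' u'(2) by auto
  then have "insert i' S \<subseteq> {..<n}" "card (insert i' S) = Suc r"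
    using S i' finite_subset[OF S(1)] by auto
  moreover have "\<forall>l\<in>insert i' S. w l \<bullet> (v + t *\<^sub>R u') = b l"
    using on vS u'(2) by (simp add: inner_add_right)
  ultimately show ?case using inW by blast
qed

lemma closed_cell_has_vertex:
  assumes "affine F" "simple_in n w b F m" "m \<le> n" "c \<in> realized n w b F"
  shows "verts n w b F m \<inter> closed_cell n w b F c \<noteq> {}"
proof -
  obtain v S where "v \<in> closed_cell n w b F c" "S \<subseteq> {..<n}" "card S = m" "\<forall>i\<in>S. w i \<bullet> v = b i"
    using closed_cell_point_on_hyperplanes[OF assms order_refl] by blast
  moreover have "v \<in> F" using \<open>v \<in> closed_cell n w b F c\<close> by (rule closed_cellD)
  ultimately have "v \<in> verts n w b F m \<inter> closed_cell n w b F c"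
    unfolding verts_def mem_Inter_hyp_iff by blast
  then show ?thesis by blast
qed

lemma finite_verts:
  assumes s: "simple_in n w b F m"
  shows "finite (verts n w b F m)"
proof -
  have "verts n w b F m \<subseteq> (\<Union>S\<in>{S. S \<subseteq> {..<n} \<and> card S = m}. F \<inter> \<Inter>(hyp w b ` S))"
    unfolding verts_def by blast
  moreover have "finite (F \<inter> \<Inter>(hyp w b ` S))" if "S \<subseteq> {..<n}" "card S = m" for S
    using simple_in_singleton[OF s that] by (metis finite.emptyI finite_insert)
  then have "finite (\<Union>S\<in>{S. S \<subseteq> {..<n} \<and> card S = m}. F \<inter> \<Inter>(hyp w b ` S))"
    by (intro finite_UN_I) (auto intro: finite_subset[of _ "Pow {..<n}"])
  ultimately show ?thesis by (rule finite_subset)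
qed

section \<open>Dual bases and the simplex step\<close>

definition dual_basis :: "'a::euclidean_space set \<Rightarrow> (nat \<Rightarrow> 'a) \<Rightarrow> nat set \<Rightarrow> (nat \<Rightarrow> 'a) \<Rightarrow> bool" where
  "dual_basis F w S e \<longleftrightarrow>
     (\<forall>j\<in>S. e j \<in> directions F \<and> w j \<bullet> e j = 1 \<and> (\<forall>l\<in>S - {j}. w l \<bullet> e j = 0))"

lemma dual_basis_exists:
  assumes F: "affine F" and s: "simple_in n w b F m" and S: "S \<subseteq> {..<n}" "card S = m"
  obtains e where "dual_basis F w S e"
proof -
  have "\<exists>u. u \<in> directions F \<and> w j \<bullet> u = 1 \<and> (\<forall>l\<in>S - {j}. w l \<bullet> u = 0)" if j: "j \<in> S" for j
  proof -
    have "finite S" using S(1) finite_subset by blast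
    then have "card (S - {j}) = m - 1" "m \<ge> 1"
      using j S(2) card_gt_0_iff[of S] by auto
    then have "aff_dim (F \<inter> \<Inter>(hyp w b ` (S - {j}))) = 1"
      using simple_in_aff_dim[OF s, of "S - {j}"] S(1) by auto
    moreover obtain z where z: "F \<inter> \<Inter>(hyp w b ` S) = {z}" using simple_in_singleton[OF s S] .
    then have zG: "z \<in> F \<inter> \<Inter>(hyp w b ` (S - {j}))" by auto
    ultimately have "F \<inter> \<Inter>(hyp w b ` (S - {j})) \<noteq> {z}" by auto
    then obtain q where q: "q \<in> F \<inter> \<Inter>(hyp w b ` (S - {j}))" "q \<noteq> z" using zG by blast
    have u: "q - z \<in> directions F" using diff_in_directions[OF F] q(1) zG by blast
    have orth: "\<forall>l\<in>S - {j}. w l \<bullet> (q - z) = 0" using zG q(1) by (auto simp: inner_diff_right hyp_def)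
    have "w j \<bullet> (q - z) \<noteq> 0"
    proof
      assume "w j \<bullet> (q - z) = 0"
      then have "q - z = 0" using directions_orthogonal_eq_0[OF s S u] orth by blast
      then show False using q(2) by simp
    qed
    then show ?thesis using u orth subspace_scale[OF subspace_directions u, of "1 / (w j \<bullet> (q - z))"]
      by (intro exI[of _ "(1 / (w j \<bullet> (q - z))) *\<^sub>R (q - z)"]) auto
  qed
  then obtain e where "\<forall>j\<in>S. e j \<in> directions F \<and> w j \<bullet> e j = 1 \<and> (\<forall>l\<in>S - {j}. w l \<bullet> e j = 0)"
    by metis
  then show ?thesis using that unfolding dual_basis_def by blast
qed

lemma dual_basis_sum_in_directions:
  "dual_basis F w S e \<Longrightarrow> (\<Sum>j\<in>S. f j *\<^sub>R e j) \<in> directions F"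
  unfolding dual_basis_def
  by (intro subspace_sum[OF subspace_directions] subspace_scale[OF subspace_directions]) auto

lemma inner_dual_basis_sum:
  assumes "dual_basis F w S e" "finite S" "i \<in> S"
  shows "w i \<bullet> (\<Sum>j\<in>S. f j *\<^sub>R e j) = f i"
proof -
  have "w i \<bullet> (\<Sum>j\<in>S. f j *\<^sub>R e j) = (\<Sum>j\<in>S. if j = i then f i else 0)"
    unfolding inner_sum_right
  proof (rule sum.cong[OF refl])
    fix j assume "j \<in> S"
    then show "w i \<bullet> (f j *\<^sub>R e j) = (if j = i then f i else 0)"
      using assms(1,3) unfolding dual_basis_def by auto
  qed
  also have "\<dots> = f i" using assms(2,3) by simp
  finally show ?thesis .
qed

lemma dual_basis_not_orthogonal:
  assumes e: "dual_basis F w S e" and s': "simple_in n w b (F \<inter> {x. a \<bullet> x = r}) (m - 1)"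
    and S: "S \<subseteq> {..<n}" "card S = m" and j: "j \<in> S"
  shows "a \<bullet> e j \<noteq> 0"
proof
  assume "a \<bullet> e j = 0"
  then have "e j \<in> directions (F \<inter> {x. a \<bullet> x = r})"
    using e j unfolding dual_basis_def directions_def by (auto simp: inner_add_right)
  moreover have "finite S" using S(1) finite_subset by blast
  then have "S - {j} \<subseteq> {..<n}" "card (S - {j}) = m - 1" using S j by auto
  ultimately have "e j = 0"
    using directions_orthogonal_eq_0[OF s'] e j unfolding dual_basis_def by blast
  moreover have "w j \<bullet> e j = 1" using e j unfolding dual_basis_def by blast
  ultimately show False by simp
qed

lemma bounded_closed_cell_ray_leaves:
  assumes v: "v \<in> closed_cell n w b F c" and u: "u \<in> directions F" and au: "0 < a \<bullet> u"
    and bounded: "closed_cell n w b F c \<subseteq> {x. a \<bullet> x \<le> r}"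
  shows "\<exists>i<n. orient c i * (w i \<bullet> u) < 0"
proof (rule ccontr)
  assume "\<not> ?thesis"
  then have "\<forall>i<n. 0 \<le> orient c i * (w i \<bullet> u)" by (meson not_less)
  moreover define t where "t = (r - a \<bullet> v) / (a \<bullet> u) + 1"
  moreover have "a \<bullet> v \<le> r" using bounded v by auto
  then have "t \<ge> 0" unfolding t_def using au by simp
  ultimately have "a \<bullet> (v + t *\<^sub>R u) \<le> r" using ray_in_closed_cell[OF v u] bounded by blast
  moreover have "a \<bullet> (v + t *\<^sub>R u) = r + a \<bullet> u"
    unfolding t_def using au by (simp add: inner_add_right field_simps)
  ultimately show False using au by simp
qed

text \<open>One step of the simplex method, along the edge on which the hyperplanes of S - {j} stay
  tight.\<close>

lemma higher_vertex_along_edge: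
  assumes s: "simple_in n w b F m" and v: "v \<in> closed_cell n w b F c"
    and S: "S \<subseteq> {..<n}" "card S = m" and vS: "\<forall>i\<in>S. w i \<bullet> v = b i"
    and j: "j \<in> S" and u: "u \<in> directions F" and uS: "\<forall>l\<in>S - {j}. w l \<bullet> u = 0"
    and uj: "0 < orient c j * (w j \<bullet> u)" and au: "0 < a \<bullet> u"
    and bounded: "closed_cell n w b F c \<subseteq> {x. a \<bullet> x \<le> r}"
  shows "\<exists>v'\<in>verts n w b F m \<inter> closed_cell n w b F c. a \<bullet> v < a \<bullet> v'"
proof -
  obtain i0 where i0: "i0 < n" "orient c i0 * (w i0 \<bullet> u) < 0"
    using bounded_closed_cell_ray_leaves[OF v u au bounded] by blast
  obtain i t where i: "i < n" "orient c i * (w i \<bullet> u) < 0"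
    and t: "t = orient c i * (w i \<bullet> v - b i) / (- (orient c i * (w i \<bullet> u)))"
    and inW: "v + t *\<^sub>R u \<in> closed_cell n w b F c" and on: "w i \<bullet> (v + t *\<^sub>R u) = b i"
    using ray_leaves_closed_cell[OF v u i0] by blast
  have iS: "i \<notin> S" using i(2) uS uj by (cases "i = j") auto
  have "finite S" using S(1) finite_subset by blast
  have "w i \<bullet> v \<noteq> b i"
    using simple_in_off_hyp[OF s S vS closed_cellD[OF v] i(1) iS] .
  have "0 \<le> orient c i * (w i \<bullet> v - b i)" using v i unfolding closed_cell_def by auto
  moreover have "orient c i * (w i \<bullet> v - b i) \<noteq> 0" using \<open>w i \<bullet> v \<noteq> b i\<close> by simp
  ultimately have "0 < orient c i * (w i \<bullet> v - b i)" by linarith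
  then have "0 < t" unfolding t using i(2) by (intro divide_pos_pos) auto
  then have higher: "a \<bullet> v < a \<bullet> (v + t *\<^sub>R u)" using au by (simp add: inner_add_right)
  have "m > 0" using \<open>finite S\<close> j S(2) card_gt_0_iff by blast
  then have "card (insert i (S - {j})) = m"
    using \<open>finite S\<close> iS j S(2) by (simp add: card_Suc_Diff1)
  moreover have "\<forall>l\<in>insert i (S - {j}). w l \<bullet> (v + t *\<^sub>R u) = b l"
    using on vS uS by (simp add: inner_add_right)
  ultimately have "v + t *\<^sub>R u \<in> verts n w b F m"
    using closed_cellD[OF inW] S(1) i(1) unfolding verts_def mem_Inter_hyp_iff
    by (intro CollectI conjI exI[of _ "insert i (S - {j})"]) auto
  then show ?thesis using inW higher by blast
qed

section \<open>The cube at the top vertex of a cell\<close>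

definition peel_time :: "nat \<Rightarrow> (nat \<Rightarrow> 'a::euclidean_space) \<Rightarrow> (nat \<Rightarrow> real) \<Rightarrow> 'a set \<Rightarrow> nat
    \<Rightarrow> 'a \<Rightarrow> nat set \<Rightarrow> real" where
  "peel_time n w b F m a c = Max ((\<lambda>v. a \<bullet> v) ` (verts n w b F m \<inter> closed_cell n w b F c))"

lemma peel_time_upper:
  assumes "simple_in n w b F m" "v \<in> verts n w b F m \<inter> closed_cell n w b F c"
  shows "a \<bullet> v \<le> peel_time n w b F m a c"
  unfolding peel_time_def using assms finite_verts[OF assms(1)] by (intro Max_ge) auto

lemma top_vertex_exists:
  assumes "affine F" "simple_in n w b F m" "m \<le> n" "c \<in> realized n w b F"
  obtains v where "v \<in> verts n w b F m \<inter> closed_cell n w b F c" "a \<bullet> v = peel_time n w b F m a c"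
proof -
  have "peel_time n w b F m a c \<in> (\<lambda>v. a \<bullet> v) ` (verts n w b F m \<inter> closed_cell n w b F c)"
    unfolding peel_time_def using closed_cell_has_vertex[OF assms] finite_verts[OF assms(2)]
    by (intro Max_in) auto
  then show ?thesis using that by auto
qed

lemma orient_cube_outside: "T \<subseteq> S \<Longrightarrow> i \<notin> S \<Longrightarrow> orient ((c - S) \<union> T) i = orient c i"
  unfolding orient_def by auto

lemma vertex_in_closed_cell_cube:
  assumes v: "v \<in> closed_cell n w b F c" and vS: "\<forall>i\<in>S. w i \<bullet> v = b i" and T: "T \<subseteq> S"
  shows "v \<in> closed_cell n w b F ((c - S) \<union> T)"
proof -
  have "0 \<le> orient ((c - S) \<union> T) i * (w i \<bullet> v - b i)" if "i < n" for i
    using v vS orient_cube_outside[OF T, of i c] that unfolding closed_cell_def by (cases "i \<in> S") auto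
  then show ?thesis using closed_cellD[OF v] unfolding closed_cell_def by blast
qed

text \<open>Moving from v along a signed combination of the dual basis realizes every sign pattern
  on S.\<close>

lemma realized_cube_at_vertex:
  assumes s: "simple_in n w b F m" and S: "S \<subseteq> {..<n}" "card S = m"
    and v: "v \<in> closed_cell n w b F c" and vS: "\<forall>i\<in>S. w i \<bullet> v = b i" and c: "c \<subseteq> {..<n}"
    and e: "dual_basis F w S e" and T: "T \<subseteq> S"
  shows "(c - S) \<union> T \<in> realized n w b F"
proof -
  define c' where "c' = (c - S) \<union> T"
  define u where "u = (\<Sum>j\<in>S. orient c' j *\<^sub>R e j)"
  have "finite S" using S(1) finite_subset by blast
  have "\<forall>i<n. 0 < orient c' i * (w i \<bullet> v - b i) \<or> (w i \<bullet> v = b i \<and> 0 < orient c' i * (w i \<bullet> u))"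
  proof (intro allI impI)
    fix i assume i: "i < n"
    show "0 < orient c' i * (w i \<bullet> v - b i) \<or> (w i \<bullet> v = b i \<and> 0 < orient c' i * (w i \<bullet> u))"
    proof (cases "i \<in> S")
      case True
      then show ?thesis using vS inner_dual_basis_sum[OF e \<open>finite S\<close>] unfolding u_def by simp
    next
      case False
      have "0 \<le> orient c i * (w i \<bullet> v - b i)" using v i unfolding closed_cell_def by auto
      moreover have "w i \<bullet> v \<noteq> b i"
        using simple_in_off_hyp[OF s S vS closed_cellD[OF v] i False] .
      ultimately show ?thesis
        using orient_cube_outside[OF T False] unfolding c'_def by (simp add: less_le)
    qed
  qed
  then obtain t where "v + t *\<^sub>R u \<in> open_cell n w b F c'"
    using open_cell_along_direction[OF closed_cellD[OF v] dual_basis_sum_in_directions[OF e]]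
    unfolding u_def by blast
  moreover have "c' \<subseteq> {..<n}" unfolding c'_def using c S T by auto
  ultimately show ?thesis unfolding c'_def realized_def by auto
qed

lemma top_vertex_edges_descend:
  assumes s: "simple_in n w b F m" and S: "S \<subseteq> {..<n}" "card S = m"
    and v: "v \<in> closed_cell n w b F c" and vS: "\<forall>i\<in>S. w i \<bullet> v = b i"
    and top: "\<forall>v'\<in>verts n w b F m \<inter> closed_cell n w b F c. a \<bullet> v' \<le> a \<bullet> v"
    and bounded: "closed_cell n w b F c \<subseteq> {x. a \<bullet> x \<le> r}"
    and e: "dual_basis F w S e" and j: "j \<in> S" and generic: "a \<bullet> e j \<noteq> 0"
  shows "a \<bullet> (orient c j *\<^sub>R e j) < 0"
proof (rule ccontr)
  assume "\<not> ?thesis"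
  moreover have "a \<bullet> (orient c j *\<^sub>R e j) \<noteq> 0" using generic by simp
  ultimately have up: "0 < a \<bullet> (orient c j *\<^sub>R e j)" by linarith
  have "orient c j *\<^sub>R e j \<in> directions F"
    using e j subspace_scale[OF subspace_directions] unfolding dual_basis_def by blast
  moreover have "\<forall>l\<in>S - {j}. w l \<bullet> (orient c j *\<^sub>R e j) = 0" "0 < orient c j * (w j \<bullet> (orient c j *\<^sub>R e j))"
    using e j unfolding dual_basis_def by auto
  ultimately obtain v' where "v' \<in> verts n w b F m \<inter> closed_cell n w b F c" "a \<bullet> v < a \<bullet> v'"
    using higher_vertex_along_edge[OF s v S vS j _ _ _ up bounded] by blast
  then show False using top by force
qed

text \<open>If a cell of the cube at the top vertex v of cell c, other than c itself, is also missed by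
  the final sweeping hyperplane, then it has a vertex above v: walk from v along the dual edge of a
  coordinate where its sign differs from c; that edge ascends because it descends from c.\<close>

lemma later_vertex_in_cube:
  assumes F: "affine F" and s: "simple_in n w b F m" and S: "S \<subseteq> {..<n}" "card S = m"
    and below: "\<forall>v\<in>verts n w b F m. a \<bullet> v < r"
    and v: "v \<in> verts n w b F m \<inter> closed_cell n w b F c" and vS: "\<forall>i\<in>S. w i \<bullet> v = b i"
    and e: "dual_basis F w S e" and descend: "\<forall>j\<in>S. a \<bullet> (orient c j *\<^sub>R e j) < 0"
    and T: "T \<subseteq> S" and ne: "(c - S) \<union> T \<noteq> c" and c': "(c - S) \<union> T \<in> realized n w b F"
    and missed: "open_cell n w b F ((c - S) \<union> T) \<inter> {x. a \<bullet> x = r} = {}"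
  shows "\<exists>v'\<in>verts n w b F m \<inter> closed_cell n w b F ((c - S) \<union> T). a \<bullet> v < a \<bullet> v'"
proof -
  define c' where "c' = (c - S) \<union> T"
  obtain j where j: "j \<in> S" "(j \<in> c') \<noteq> (j \<in> c)"
    using ne T unfolding c'_def by blast
  then have flip: "orient c' j = - orient c j" unfolding orient_def by auto
  have v': "v \<in> closed_cell n w b F c'"
    unfolding c'_def using vertex_in_closed_cell_cube[OF _ vS T] v by blast
  have "closed_cell n w b F c' \<subseteq> {x. a \<bullet> x \<le> r}"
    using open_cell_side_of_hyperplane[OF F _ missed[folded c'_def] v'] c' below v
    unfolding c'_def realized_def by blast
  moreover have "orient c' j *\<^sub>R e j \<in> directions F"
    using e j subspace_scale[OF subspace_directions] unfolding dual_basis_def by blast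
  moreover have "\<forall>l\<in>S - {j}. w l \<bullet> (orient c' j *\<^sub>R e j) = 0" "0 < orient c' j * (w j \<bullet> (orient c' j *\<^sub>R e j))"
    using e j unfolding dual_basis_def by auto
  moreover have "0 < a \<bullet> (orient c' j *\<^sub>R e j)" using descend j(1) flip by simp
  ultimately show ?thesis
    using higher_vertex_along_edge[OF s v' S vS j(1)] unfolding c'_def by blast
qed

section \<open>Cubes have dimension at most the dimension of the flat\<close>

lemma dual_basis_decomposition:
  assumes e: "dual_basis F w S e" and "finite S" and z: "F \<inter> \<Inter>(hyp w b ` S) = {z}" and x: "x \<in> F"
  shows "x = z + (\<Sum>i\<in>S. (w i \<bullet> x - b i) *\<^sub>R e i)"
proof -
  define y where "y = x + (-1) *\<^sub>R (\<Sum>i\<in>S. (w i \<bullet> x - b i) *\<^sub>R e i)"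
  have "y \<in> F" unfolding y_def using add_in_directions[OF dual_basis_sum_in_directions[OF e] x] .
  moreover have "w l \<bullet> y = b l" if "l \<in> S" for l
    using inner_dual_basis_sum[OF e \<open>finite S\<close> that] unfolding y_def by (simp add: inner_diff_right)
  ultimately have "y = z" using z unfolding hyp_def by auto
  then show ?thesis unfolding y_def by (simp add: algebra_simps)
qed

lemma dual_basis_slack:
  assumes "dual_basis F w S e" "finite S" "F \<inter> \<Inter>(hyp w b ` S) = {z}" "x \<in> F"
  shows "w j \<bullet> x - b j = (w j \<bullet> z - b j) + (\<Sum>i\<in>S. (w i \<bullet> x - b i) * (w j \<bullet> e i))"
proof -
  have "w j \<bullet> x = w j \<bullet> (z + (\<Sum>i\<in>S. (w i \<bullet> x - b i) *\<^sub>R e i))"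
    using dual_basis_decomposition[OF assms] by (rule arg_cong)
  then show ?thesis by (simp add: inner_add_right inner_sum_right)
qed

text \<open>Choose j in K and write the slacks of a point x of a cell through the dual basis of
  S = K - {j} around the common point z of S: the slack of j is an affine function of the slacks
  of S, and choosing the signs on S to agree with its coefficients forces the wrong sign on j.\<close>

lemma not_shattered:
  assumes F: "affine F" and s: "simple_in n w b F m"
    and K: "K \<subseteq> {..<n}" "card K = Suc m" and B: "B \<inter> K = {}"
  shows "\<exists>T\<subseteq>K. B \<union> T \<notin> realized n w b F"
proof (rule ccontr)
  assume "\<not> ?thesis"
  then have all: "B \<union> T \<in> realized n w b F" if "T \<subseteq> K" for T using that by blast
  have "finite K" using K(1) finite_subset by blast
  obtain j where j: "j \<in> K" using K(2) by fastforce
  define S where "S = K - {j}"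
  have S: "S \<subseteq> {..<n}" "card S = m" "finite S" "j \<notin> S"
    unfolding S_def using K j \<open>finite K\<close> by auto
  obtain z where z: "F \<inter> \<Inter>(hyp w b ` S) = {z}" using simple_in_singleton[OF s S(1,2)] .
  obtain e where e: "dual_basis F w S e" using dual_basis_exists[OF F s S(1,2)] .
  define c0 where "c0 = w j \<bullet> z - b j"
  have "z \<notin> hyp w b j" using simple_in_off_hyp[OF s S(1,2), of z j] z K(1) j S(4)
    unfolding hyp_def by auto
  then have "c0 \<noteq> 0" unfolding c0_def hyp_def by auto
  define \<sigma> :: real where "\<sigma> = (if c0 > 0 then 1 else -1)"
  define T where "T = {i \<in> S. 0 \<le> \<sigma> * (w j \<bullet> e i)} \<union> (if c0 > 0 then {} else {j})"
  have "T \<subseteq> K" unfolding T_def S_def using j by auto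
  then obtain x where x: "x \<in> open_cell n w b F (B \<union> T)" using all unfolding realized_def by blast
  define f where "f i = w i \<bullet> x - b i" for i
  have pos: "0 < orient (B \<union> T) i * f i" if "i < n" for i
    using x that unfolding open_cell_def f_def by auto
  have "x \<in> F" using x unfolding open_cell_def by blast
  then have fj: "f j = c0 + (\<Sum>i\<in>S. f i * (w j \<bullet> e i))"
    unfolding f_def c0_def by (rule dual_basis_slack[OF e S(3) z])
  have "0 \<le> \<sigma> * (f i * (w j \<bullet> e i))" if i: "i \<in> S" for i
  proof -
    have "i < n" "i \<notin> B" using i S(1) B unfolding S_def by auto
    then have pos_i: "0 < orient (B \<union> T) i * f i" using pos by blast
    have eq: "\<sigma> * (f i * (w j \<bullet> e i)) = f i * (\<sigma> * (w j \<bullet> e i))" by simp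
    show ?thesis
    proof (cases "0 \<le> \<sigma> * (w j \<bullet> e i)")
      case True
      then have "i \<in> B \<union> T" unfolding T_def using i by auto
      then have "0 < f i" using pos_i unfolding orient_def by auto
      then show ?thesis unfolding eq using True by simp
    next
      case False
      then have "i \<notin> B \<union> T" unfolding T_def using i S(4) \<open>i \<notin> B\<close> by auto
      then have "f i < 0" using pos_i unfolding orient_def by auto
      then show ?thesis unfolding eq using False by (simp add: mult_nonpos_nonpos)
    qed
  qed
  then have "0 \<le> \<sigma> * (\<Sum>i\<in>S. f i * (w j \<bullet> e i))" by (simp add: sum_nonneg sum_distrib_left)
  moreover have "0 < \<sigma> * c0" unfolding \<sigma>_def using \<open>c0 \<noteq> 0\<close> by auto
  ultimately have "0 < \<sigma> * f j" unfolding fj by (simp add: distrib_left)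
  moreover have "j < n" "j \<notin> B" using K(1) j B by auto
  then have "\<sigma> * f j < 0"
    using pos[of j] S(4) unfolding T_def \<sigma>_def orient_def by (auto split: if_splits)
  ultimately show False by simp
qed

lemma is_cube_realized_dim_le:
  assumes "affine F" "simple_in n w b F m" "D \<subseteq> realized n w b F" "is_cube n D Q k"
  shows "k \<le> m"
proof (rule ccontr)
  assume "\<not> k \<le> m"
  obtain K B where KB: "K \<subseteq> {..<n}" "card K = k" "B \<subseteq> {..<n} - K"
    "Q = (\<lambda>T. B \<union> T) ` Pow K" "Q \<subseteq> D"
    using assms(4) unfolding is_cube_def by blast
  obtain K' where K': "K' \<subseteq> K" "card K' = Suc m"
    using obtain_subset_with_card_n[of "Suc m" K] \<open>\<not> k \<le> m\<close> KB(2) by (metis not_less_eq_eq)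
  have "K' \<subseteq> {..<n}" "B \<inter> K' = {}" using K' KB by auto
  then obtain T where "T \<subseteq> K'" "B \<union> T \<notin> realized n w b F"
    using not_shattered[OF assms(1,2) _ K'(2)] by blast
  moreover have "B \<union> T \<in> Q" using KB(4) \<open>T \<subseteq> K'\<close> K'(1) by auto
  ultimately show False using KB(5) assms(3) by auto
qed

section \<open>The sweep\<close>

lemma peeled_atD:
  assumes "peeled_at n d w b a s k t c"
  shows "k \<le> d" "c \<in> realized n w b (flat a s k)"
    "k < d \<Longrightarrow> open_cell n w b (flat a s k) c \<inter> {x. a k \<bullet> x = s k} = {}"
    "k < d \<Longrightarrow> t = peel_time n w b (flat a s k) (d - k) (a k) c"
proof -
  obtain K where k: "k \<le> d" and K: "K \<in> cells n w b (flat a s k)" "cell_concept n w b K = c"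
    and rest: "if k < d then K \<inter> flat a s (Suc k) = {} \<and>
        t = Max ((\<lambda>v. a k \<bullet> v) ` (verts n w b (flat a s k) (d - k) \<inter> closure K)) else t = 0"
    using assms unfolding peeled_at_def by blast
  from K(1) obtain c0 where c0: "c0 \<in> realized n w b (flat a s k)" "K = open_cell n w b (flat a s k) c0"
    unfolding cells_eq_open_cells[OF affine_imp_convex[OF affine_flat]] by auto
  then have "c0 = c" using K(2) cell_concept_open_cell by metis
  moreover have "open_cell n w b (flat a s k) c0 \<noteq> {}" using c0(1) unfolding realized_def by blast
  ultimately have cl: "closure K = closed_cell n w b (flat a s k) c"
    using closure_open_cell[OF affine_flat] c0(2) by simp
  show "k \<le> d" "c \<in> realized n w b (flat a s k)" using k c0 \<open>c0 = c\<close> by auto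
  assume "k < d"
  have "open_cell n w b (flat a s k) c \<inter> {x. a k \<bullet> x = s k} \<subseteq> K \<inter> flat a s (Suc k)"
    using c0(2) \<open>c0 = c\<close> unfolding open_cell_def by auto
  then show "open_cell n w b (flat a s k) c \<inter> {x. a k \<bullet> x = s k} = {}"
    using rest \<open>k < d\<close> by auto
  show "t = peel_time n w b (flat a s k) (d - k) (a k) c"
    using rest \<open>k < d\<close> cl unfolding peel_time_def by auto
qed

locale sweep =
  fixes n d :: nat and w :: "nat \<Rightarrow> 'a::euclidean_space" and b :: "nat \<Rightarrow> real"
    and a :: "nat \<Rightarrow> 'a" and s :: "nat \<Rightarrow> real"
  assumes d_le_n: "d \<le> n" and simple: "simple_in n w b UNIV d" and ok: "sweep_ok n d w b a s"
begin

definition level_class :: "nat \<Rightarrow> nat set set" where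
  "level_class k = realized n w b (flat a s k)"

definition level :: "nat set \<Rightarrow> nat" where
  "level c = Max {k. k \<le> d \<and> c \<in> level_class k}"

lemma vertices_below: "k < d \<Longrightarrow> v \<in> verts n w b (flat a s k) (d - k) \<Longrightarrow> a k \<bullet> v < s k"
  using ok unfolding sweep_ok_def by blast

lemma simple_flat: "k \<le> d \<Longrightarrow> simple_in n w b (flat a s k) (d - k)"
  using simple ok unfolding sweep_ok_def by (cases k) auto

lemma simple_sweep_hyperplane:
  "k < d \<Longrightarrow> simple_in n w b (flat a s k \<inter> {x. a k \<bullet> x = s k}) (d - k - 1)"
  using simple_flat[of "Suc k"] by simp

lemma card_level_class: "k \<le> d \<Longrightarrow> card (level_class k) = sauer_bound n (d - k)"
  unfolding level_class_def by (rule card_realized[OF affine_flat simple_flat])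

lemma level_class_antimono: "k \<le> k' \<Longrightarrow> level_class k' \<subseteq> level_class k"
  unfolding level_class_def by (intro realized_mono flat_antimono)

lemma level_class_0: "level_class 0 = concept_class n w b"
  by (simp add: level_class_def concept_class_eq_realized)

lemma level_class_subset: "level_class k \<subseteq> concept_class n w b"
  using level_class_antimono[of 0 k] level_class_0 by simp

lemma level_le: "c \<in> concept_class n w b \<Longrightarrow> level c \<le> d"
  unfolding level_def by (rule Max.boundedI) (auto simp: level_class_0[symmetric])

lemma mem_level_class_iff:
  assumes "c \<in> concept_class n w b" "k \<le> d"
  shows "c \<in> level_class k \<longleftrightarrow> k \<le> level c"
proof
  show "c \<in> level_class k \<Longrightarrow> k \<le> level c" unfolding level_def using assms(2) by (intro Max_ge) auto
next
  have "level c \<in> {k. k \<le> d \<and> c \<in> level_class k}"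
    unfolding level_def using assms(1) by (intro Max_in) (auto simp: level_class_0[symmetric])
  then show "k \<le> level c \<Longrightarrow> c \<in> level_class k" using level_class_antimono by auto
qed

lemma not_mem_level_class_Suc_iff:
  "c \<in> level_class k \<Longrightarrow>
    c \<notin> level_class (Suc k) \<longleftrightarrow> open_cell n w b (flat a s k) c \<inter> {x. a k \<bullet> x = s k} = {}"
  unfolding level_class_def realized_def by (simp add: open_cell_Int_hyperplane)

lemma peeled_at_level:
  assumes p: "peeled_at n d w b a s k t c"
  shows "k = level c"
proof -
  have k: "k \<le> d" "c \<in> level_class k" using peeled_atD[OF p] unfolding level_class_def by auto
  then have c: "c \<in> concept_class n w b" using level_class_subset by auto
  have "\<not> Suc k \<le> level c" if "k < d"
    using peeled_atD(3)[OF p that] not_mem_level_class_Suc_iff[OF k(2)]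
      mem_level_class_iff[OF c, of "Suc k"] that by simp
  then show ?thesis using k mem_level_class_iff[OF c k(1)] level_le[OF c] by fastforce
qed

end

context sweep
begin

text \<open>The cube peeled with a concept c of level k: the cells around the top vertex of the cell
  of c all survive at level k, and those that are peeled at level k too are peeled after c.\<close>

lemma sweep_cube:
  assumes k: "k < d" and c: "c \<in> level_class k" "c \<notin> level_class (Suc k)"
  obtains S where "S \<subseteq> {..<n}" "card S = d - k" "\<forall>T\<subseteq>S. (c - S) \<union> T \<in> level_class k"
    "\<forall>T\<subseteq>S. (c - S) \<union> T \<noteq> c \<longrightarrow> (c - S) \<union> T \<notin> level_class (Suc k) \<longrightarrow>
       peel_time n w b (flat a s k) (d - k) (a k) c
         < peel_time n w b (flat a s k) (d - k) (a k) ((c - S) \<union> T)"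
proof -
  let ?F = "flat a s k" and ?m = "d - k" and ?time = "peel_time n w b (flat a s k) (d - k) (a k)"
  have s: "simple_in n w b ?F ?m" using simple_flat k by simp
  have creal: "c \<in> realized n w b ?F" using c(1) unfolding level_class_def .
  have "?m \<le> n" using d_le_n by simp
  then obtain v where v: "v \<in> verts n w b ?F ?m \<inter> closed_cell n w b ?F c" and tv: "a k \<bullet> v = ?time c"
    using top_vertex_exists[OF affine_flat s _ creal, of "a k"] by blast
  then obtain S where S: "S \<subseteq> {..<n}" "card S = ?m" and vS: "\<forall>i\<in>S. w i \<bullet> v = b i"
    unfolding verts_def hyp_def by blast
  obtain e where e: "dual_basis ?F w S e" using dual_basis_exists[OF affine_flat s S] .
  have "closed_cell n w b ?F c \<subseteq> {x. a k \<bullet> x \<le> s k}"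
    using open_cell_side_of_hyperplane[of ?F n w b c "a k" "s k" v] affine_flat creal v
      not_mem_level_class_Suc_iff[OF c(1)] c(2) vertices_below[OF k] unfolding realized_def by blast
  moreover have "\<forall>v'\<in>verts n w b ?F ?m \<inter> closed_cell n w b ?F c. a k \<bullet> v' \<le> a k \<bullet> v"
    using peel_time_upper[OF s] tv by simp
  ultimately have descend: "\<forall>j\<in>S. a k \<bullet> (orient c j *\<^sub>R e j) < 0"
    using top_vertex_edges_descend[OF s S _ vS _ _ e] v
      dual_basis_not_orthogonal[OF e simple_sweep_hyperplane[OF k] S] by blast
  have cube: "\<forall>T\<subseteq>S. (c - S) \<union> T \<in> level_class k"
    using realized_cube_at_vertex[OF s S _ vS _ e] v creal unfolding level_class_def realized_def by blast
  have "?time c < ?time ((c - S) \<union> T)"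
    if T: "T \<subseteq> S" "(c - S) \<union> T \<noteq> c" "(c - S) \<union> T \<notin> level_class (Suc k)" for T
  proof -
    have "(c - S) \<union> T \<in> realized n w b ?F" using cube T(1) unfolding level_class_def by blast
    moreover have "open_cell n w b ?F ((c - S) \<union> T) \<inter> {x. a k \<bullet> x = s k} = {}"
      using not_mem_level_class_Suc_iff cube T by blast
    ultimately obtain v' where "v' \<in> verts n w b ?F ?m \<inter> closed_cell n w b ?F ((c - S) \<union> T)"
      "a k \<bullet> v < a k \<bullet> v'"
      using later_vertex_in_cube[OF affine_flat s S _ v vS e descend T(1,2)] vertices_below[OF k] by blast
    then show ?thesis using peel_time_upper[OF s, of v' "(c - S) \<union> T" "a k"] tv by linarith
  qed
  then show ?thesis using that S cube by blast
qed

end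

lemma downward_closed_eq_lessThan:
  fixes A :: "nat set"
  assumes "finite A" "\<And>t t'. t \<in> A \<Longrightarrow> t' < t \<Longrightarrow> t' \<in> A"
  shows "A = {..<card A}"
proof (cases "A = {}")
  case False
  have "A = {..<Suc (Max A)}"
  proof
    show "A \<subseteq> {..<Suc (Max A)}" using assms(1) by (auto simp: less_Suc_eq_le)
    show "{..<Suc (Max A)} \<subseteq> A"
      using Max_in[OF assms(1) False] assms(2) by (auto simp: less_Suc_eq_le le_less)
  qed
  then show ?thesis using card_lessThan by metis
qed simp

locale sweep_sequence = sweep n d w b a s
  for n d :: nat and w :: "nat \<Rightarrow> 'a::euclidean_space" and b :: "nat \<Rightarrow> real"
    and a :: "nat \<Rightarrow> 'a" and s :: "nat \<Rightarrow> real" +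
  fixes vs :: "nat set list"
  assumes order: "sweep_order n d w b a s vs"
begin

lemma distinct_vs: "distinct vs" and set_vs: "set vs = concept_class n w b"
  using order unfolding sweep_order_def by blast+

lemma length_vs: "length vs = sauer_bound n d"
  using distinct_card[OF distinct_vs] card_level_class[of 0] by (simp add: set_vs level_class_0)

lemma nth_mem_concept_class: "t < length vs \<Longrightarrow> vs ! t \<in> concept_class n w b"
  using set_vs nth_mem by blast

lemma peeled_before:
  assumes "i < j" "j < length vs"
  obtains t t' where "peeled_at n d w b a s (level (vs ! i)) t (vs ! i)"
    "peeled_at n d w b a s (level (vs ! j)) t' (vs ! j)"
    "level (vs ! i) < level (vs ! j) \<or> (level (vs ! i) = level (vs ! j) \<and> t \<le> t')"
proof -
  obtain k t k' t' where "peeled_at n d w b a s k t (vs ! i)" "peeled_at n d w b a s k' t' (vs ! j)"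
    "k < k' \<or> (k = k' \<and> t \<le> t')"
    using order assms unfolding sweep_order_def by blast
  then show ?thesis using that peeled_at_level by blast
qed

lemma level_mono:
  assumes "i \<le> j" "j < length vs" shows "level (vs ! i) \<le> level (vs ! j)"
proof (cases "i = j")
  case False
  then show ?thesis using peeled_before[of i j] assms by force
qed simp

lemma peel_time_mono:
  assumes "i < j" "j < length vs" "level (vs ! i) = k" "level (vs ! j) = k" "k < d"
  shows "peel_time n w b (flat a s k) (d - k) (a k) (vs ! i)
    \<le> peel_time n w b (flat a s k) (d - k) (a k) (vs ! j)"
proof -
  obtain t t' where "peeled_at n d w b a s k t (vs ! i)" "peeled_at n d w b a s k t' (vs ! j)" "t \<le> t'"
    using peeled_before[OF assms(1,2)] assms(3,4) by auto
  then show ?thesis using peeled_atD(4) assms(5) by metis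
qed

lemma level_nth_less_iff:
  assumes "k \<le> d" "t < length vs"
  shows "level (vs ! t) < k \<longleftrightarrow> t < (\<Sum>j<k. n choose (d - j))"
proof -
  define A where "A = {t. t < length vs \<and> level (vs ! t) < k}"
  have "card A = card {c \<in> set vs. level c < k}"
  proof -
    have "{c \<in> set vs. level c < k} = (\<lambda>t. vs ! t) ` A"
      unfolding A_def by (auto simp: in_set_conv_nth)
    moreover have "inj_on (\<lambda>t. vs ! t) A"
      using distinct_vs unfolding A_def by (auto simp: inj_on_def nth_eq_iff_index_eq)
    ultimately show ?thesis by (simp add: card_image)
  qed
  also have "{c \<in> set vs. level c < k} = concept_class n w b - level_class k"
    using mem_level_class_iff assms(1) level_class_subset set_vs by (auto simp: not_le)
  also have "card \<dots> = card (concept_class n w b) - card (level_class k)"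
    using level_class_subset finite_realized unfolding level_class_def by (intro card_Diff_subset) auto
  also have "\<dots> = (\<Sum>j<k. n choose (d - j))"
    using card_level_class[OF assms(1)] card_level_class[of 0] sauer_bound_split[OF assms(1), of n]
    by (simp add: level_class_0)
  finally have "card A = (\<Sum>j<k. n choose (d - j))" .
  moreover have "A = {..<card A}"
  proof (rule downward_closed_eq_lessThan)
    show "finite A" unfolding A_def by simp
    show "t' \<in> A" if "t \<in> A" "t' < t" for t t'
      using that level_mono[of t' t] unfolding A_def by auto
  qed
  ultimately have "A = {..<(\<Sum>j<k. n choose (d - j))}" by simp
  then show ?thesis using assms(2) unfolding A_def by blast
qed

end

context sweep_sequence
begin

lemma remaining_subset_level_class:
  assumes t: "t < length vs"
  shows "concept_class n w b - set (take t vs) \<subseteq> level_class (level (vs ! t))"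
proof
  fix c assume c: "c \<in> concept_class n w b - set (take t vs)"
  then obtain t' where t': "t' < length vs" "vs ! t' = c" by (auto simp: set_vs[symmetric] in_set_conv_nth)
  have "\<not> t' < t" using c t' by (auto simp: in_set_conv_nth)
  then have "level (vs ! t) \<le> level c" using level_mono t' by auto
  then show "c \<in> level_class (level (vs ! t))"
    using c mem_level_class_iff level_le[OF nth_mem_concept_class[OF t]] by auto
qed

lemma earlier_member_of_level_class:
  assumes "i < t" "t < length vs" "k = level (vs ! t)" "k < d" "vs ! i \<in> level_class k"
  shows "vs ! i \<notin> level_class (Suc k)"
    "peel_time n w b (flat a s k) (d - k) (a k) (vs ! i) \<le> peel_time n w b (flat a s k) (d - k) (a k) (vs ! t)"
proof -
  have "level (vs ! i) = k"
    using level_mono[of i t] mem_level_class_iff[OF nth_mem_concept_class, of i k] assms by auto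
  then show "vs ! i \<notin> level_class (Suc k)"
    using mem_level_class_iff[OF nth_mem_concept_class, of i "Suc k"] assms by auto
  show "peel_time n w b (flat a s k) (d - k) (a k) (vs ! i) \<le> peel_time n w b (flat a s k) (d - k) (a k) (vs ! t)"
    using peel_time_mono \<open>level (vs ! i) = k\<close> assms by simp
qed

lemma cube_dim_remaining_le:
  assumes "t < length vs" "is_cube n (concept_class n w b - set (take t vs)) Q k"
  shows "k \<le> d - level (vs ! t)"
  using is_cube_realized_dim_le[OF affine_flat simple_flat _ assms(2)]
    remaining_subset_level_class[OF assms(1)] level_le[OF nth_mem_concept_class[OF assms(1)]]
  unfolding level_class_def by blast

lemma remaining_has_cube:
  assumes t: "t < length vs"
  shows "\<exists>Q. is_cube n (concept_class n w b - set (take t vs)) Q (d - level (vs ! t)) \<and> vs ! t \<in> Q"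
proof -
  define c where "c = vs ! t"
  define k where "k = level c"
  define D where "D = concept_class n w b - set (take t vs)"
  have cD: "c \<in> D" unfolding D_def c_def
    using nth_mem_concept_class[OF t] distinct_vs t by (auto simp: in_set_conv_nth nth_eq_iff_index_eq)
  have c_sub: "c \<subseteq> {..<n}" using cD level_class_0 unfolding D_def level_class_def realized_def by auto
  show ?thesis
  proof (cases "k < d")
    case False
    have "is_cube n D {c} 0" unfolding is_cube_def
      by (intro exI[of _ "{}"] exI[of _ c] conjI) (use cD c_sub in auto)
    moreover have "d - k = 0" using False by simp
    ultimately have "is_cube n D {c} (d - k)" by simp
    then show ?thesis unfolding D_def c_def k_def by blast
  next
    case True
    have c_in: "c \<in> level_class k" "c \<notin> level_class (Suc k)"
      using mem_level_class_iff[of c] nth_mem_concept_class[OF t] True unfolding c_def k_def by auto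
    obtain S where S: "S \<subseteq> {..<n}" "card S = d - k" and cube: "\<forall>T\<subseteq>S. (c - S) \<union> T \<in> level_class k"
      and later: "\<forall>T\<subseteq>S. (c - S) \<union> T \<noteq> c \<longrightarrow> (c - S) \<union> T \<notin> level_class (Suc k) \<longrightarrow>
         peel_time n w b (flat a s k) (d - k) (a k) c
           < peel_time n w b (flat a s k) (d - k) (a k) ((c - S) \<union> T)"
      using sweep_cube[OF True c_in] by blast
    have "(c - S) \<union> T \<in> D" if T: "T \<subseteq> S" for T
    proof -
      have "(c - S) \<union> T \<notin> set (take t vs)"
      proof
        assume "(c - S) \<union> T \<in> set (take t vs)"
        then obtain i where "i < length (take t vs)" "take t vs ! i = (c - S) \<union> T"
          unfolding in_set_conv_nth by blast
        then have i: "i < t" "vs ! i = (c - S) \<union> T" by auto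
        then have "i < length vs" using t by simp
        then have "vs ! i \<noteq> c" using distinct_vs t i(1) unfolding c_def by (simp add: nth_eq_iff_index_eq)
        have "vs ! i \<in> level_class k" using cube T i(2) by simp
        note earlier = earlier_member_of_level_class[OF i(1) t k_def[unfolded c_def] True this[unfolded c_def]]
        have "peel_time n w b (flat a s k) (d - k) (a k) c < peel_time n w b (flat a s k) (d - k) (a k) (vs ! i)"
          using later T \<open>vs ! i \<noteq> c\<close> earlier(1) i(2) unfolding c_def by auto
        then show False using earlier(2) unfolding c_def by simp
      qed
      then show ?thesis using cube T level_class_subset unfolding D_def by blast
    qed
    moreover have "c - S \<subseteq> {..<n} - S" using c_sub by blast
    ultimately have "is_cube n D ((\<lambda>T. (c - S) \<union> T) ` Pow S) (d - k)"
      unfolding is_cube_def using S by blast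
    moreover have "c \<in> (\<lambda>T. (c - S) \<union> T) ` Pow S" by (rule image_eqI[of _ _ "c \<inter> S"]) auto
    ultimately show ?thesis unfolding D_def c_def k_def by blast
  qed
qed

lemma max_cube_dim_nth:
  assumes "t < length vs"
  shows "max_cube_dim n (concept_class n w b - set (take t vs)) (vs ! t) = d - level (vs ! t)"
proof -
  let ?K = "{k. \<exists>Q. is_cube n (concept_class n w b - set (take t vs)) Q k \<and> vs ! t \<in> Q}"
  have "?K \<subseteq> {..d - level (vs ! t)}" using cube_dim_remaining_le[OF assms] by auto
  moreover have "d - level (vs ! t) \<in> ?K" using remaining_has_cube[OF assms] by blast
  ultimately have "Max ?K = d - level (vs ! t)"
    by (intro Max_eqI) (auto intro: finite_subset[of _ "{..d - level (vs ! t)}"])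
  then show ?thesis unfolding max_cube_dim_def .
qed

end

theorem corollary3:
  fixes w a :: "nat \<Rightarrow> 'a::euclidean_space" and b s :: "nat \<Rightarrow> real"
    and n d :: nat and vs :: "nat set list"
  assumes "d = DIM('a)" and "d \<le> n"
    and "simple_in n w b UNIV d"
    and "sweep_ok n d w b a s"
    and "sweep_order n d w b a s vs"
  shows "length vs = (\<Sum>k\<le>d. n choose (d - k))
     \<and> (\<forall>i j. i \<le> j \<and> j < length vs \<longrightarrow>
          max_cube_dim n (concept_class n w b - set (take j vs)) (vs ! j)
            \<le> max_cube_dim n (concept_class n w b - set (take i vs)) (vs ! i))
     \<and> (\<forall>k\<le>d. \<forall>t. (\<Sum>j<k. n choose (d - j)) \<le> t \<and> t < (\<Sum>j\<le>k. n choose (d - j)) \<longrightarrow>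
          t < length vs \<and>
          max_cube_dim n (concept_class n w b - set (take t vs)) (vs ! t) = d - k)"
proof -
  interpret sweep_sequence n d w b a s vs
    using assms(2-5) by unfold_locales
  have "(\<Sum>k\<le>d. n choose (d - k)) = (\<Sum>k<d. n choose (d - k)) + 1"
    by (simp flip: lessThan_Suc_atMost)
  then have length: "length vs = (\<Sum>k\<le>d. n choose (d - k))"
    using length_vs sauer_bound_split[of d d n] by simp
  moreover have "t < length vs" if "t < (\<Sum>j\<le>k. n choose (d - j))" "k \<le> d" for k t
    using that sum_mono2[of "{..d}" "{..k}" "\<lambda>j. n choose (d - j)"] length by auto
  moreover have "level (vs ! t) = k"
    if "(\<Sum>j<k. n choose (d - j)) \<le> t" "t < (\<Sum>j\<le>k. n choose (d - j))" "k \<le> d"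
      "t < length vs" for k t
    using that level_nth_less_iff[of k t] level_nth_less_iff[of "Suc k" t]
      level_le nth_mem_concept_class
    by (cases "k = d") (force simp: lessThan_Suc_atMost not_less_eq)+
  ultimately show ?thesis
    using max_cube_dim_nth level_mono by (auto simp: diff_le_mono2)
qed

end
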